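(* Let $\mathfrak{g}_4$ be the complex Lie algebra with basis $Z_1,\dots,Z_4$ and nonzero brackets $[Z_1,Z_2]=Z_3$, $[Z_1,Z_3]=Z_4$, $[Z_1,Z_4]=Z_2$. A Hermitian inner product on $\mathfrak{g}_4$ induces an expanding algebraic soliton to HCF on the corresponding simply connected complex Lie group if and only if it is homothetically equivalent to a Hermitian inner product $g$ on $\mathfrak{g}_4$ satisfying $g(Z_2,\bar Z_2)=g(Z_3,\bar Z_3)=g(Z_4,\bar Z_4)$ and $g(Z_2,\bar Z_3)=g(Z_2,\bar Z_4)=g(Z_3,\bar Z_4)=0$.
   Context: A Hermitian inner product on a complex Lie algebra induces a left-invariant Hermitian metric on the simply connected complex Lie group. The HCF tensor $K(g)$ of such a metric is $K(g)(Z,\bar W)=\mathrm{Ric}^{1,1}(Z,\bar W)+\tfrac12\operatorname{tr}\operatorname{ad}_Z\cdot\overline{\operatorname{tr}\operatorname{ad}_W}$, with $\mathrm{Ric}^{1,1}$ the $(1,1)$-part of the Ricci tensor of the underlying Riemannian metric; $K_g$ is defined by $g(K_gX,\bar Y)=K(g)(X,\bar Y)$. The metric is an expanding algebraic soliton to HCF if $K_g=c\,I+\tfrac12(D+D^t)$ with $c<0$, $D$ a derivation and its $g$-adjoint $D^t$ also a derivation. Two Hermitian inner products are homothetically equivalent if one is a positive multiple of the pull-back of the other by a Lie algebra automorphism. *)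

theory Defs
  imports "HOL-Analysis.Analysis"
begin

datatype idx4 = I1 | I2 | I3 | I4

lemma UNIV_idx4: "(UNIV :: idx4 set) = {I1, I2, I3, I4}"
  using idx4.exhaust by auto

instance idx4 :: finite
  by standard (simp add: UNIV_idx4)

text \<open>A complex Lie algebra structure on complex^n is given by its bracket.
  Vectors X :: complex^'n; basis vectors are axis k 1.\<close>

type_synonym 'n cvec = "complex ^ 'n"

text \<open>h X Y stands for g(X, conj Y): complex-linear in X, conjugate-linear in Y.\<close>

definition hermitian_ip :: "('n::finite cvec \<Rightarrow> 'n cvec \<Rightarrow> complex) \<Rightarrow> bool" where
  "hermitian_ip h \<longleftrightarrow>
     (\<forall>X Y Z. h (X + Y) Z = h X Z + h Y Z) \<and>
     (\<forall>a X Y. h (a *s X) Y = a * h X Y) \<and>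
     (\<forall>X Y. h Y X = cnj (h X Y)) \<and>
     (\<forall>X. X \<noteq> 0 \<longrightarrow> Re (h X X) > 0)"

text \<open>Real trace of a real-linear endomorphism of complex^n, computed in the real
  basis axis k 1, axis k i.\<close>

definition real_trace :: "('n::finite cvec \<Rightarrow> 'n cvec) \<Rightarrow> real" where
  "real_trace f = (\<Sum>k\<in>UNIV. Re ((f (axis k 1)) $ k) + Im ((f (axis k \<i>)) $ k))"

definition complex_trace :: "('n::finite cvec \<Rightarrow> 'n cvec) \<Rightarrow> complex" where
  "complex_trace f = (\<Sum>k\<in>UNIV. (f (axis k 1)) $ k)"

definition riem :: "('n::finite cvec \<Rightarrow> 'n cvec \<Rightarrow> complex) \<Rightarrow> 'n cvec \<Rightarrow> 'n cvec \<Rightarrow> real" where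
  "riem h X Y = Re (h X Y)"

text \<open>Levi-Civita connection on left-invariant vector fields (Koszul formula).\<close>

definition levi_civita ::
  "('n::finite cvec \<Rightarrow> 'n cvec \<Rightarrow> 'n cvec) \<Rightarrow> ('n cvec \<Rightarrow> 'n cvec \<Rightarrow> complex) \<Rightarrow> 'n cvec \<Rightarrow> 'n cvec \<Rightarrow> 'n cvec" where
  "levi_civita br h X Y = (THE W. \<forall>Z.
      2 * riem h W Z = riem h (br X Y) Z - riem h (br Y Z) X + riem h (br Z X) Y)"

definition curvature ::
  "('n::finite cvec \<Rightarrow> 'n cvec \<Rightarrow> 'n cvec) \<Rightarrow> ('n cvec \<Rightarrow> 'n cvec \<Rightarrow> complex) \<Rightarrow> 'n cvec \<Rightarrow> 'n cvec \<Rightarrow> 'n cvec \<Rightarrow> 'n cvec" where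
  "curvature br h X Y Z =
     levi_civita br h X (levi_civita br h Y Z) - levi_civita br h Y (levi_civita br h X Z)
     - levi_civita br h (br X Y) Z"

definition ricci ::
  "('n::finite cvec \<Rightarrow> 'n cvec \<Rightarrow> 'n cvec) \<Rightarrow> ('n cvec \<Rightarrow> 'n cvec \<Rightarrow> complex) \<Rightarrow> 'n cvec \<Rightarrow> 'n cvec \<Rightarrow> real" where
  "ricci br h Y Z = real_trace (\<lambda>X. curvature br h X Y Z)"

text \<open>(1,1)-part w.r.t. the complex structure J = multiplication by i.\<close>

definition ricci11 ::
  "('n::finite cvec \<Rightarrow> 'n cvec \<Rightarrow> 'n cvec) \<Rightarrow> ('n cvec \<Rightarrow> 'n cvec \<Rightarrow> complex) \<Rightarrow> 'n cvec \<Rightarrow> 'n cvec \<Rightarrow> real" where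
  "ricci11 br h X Y = (ricci br h X Y + ricci br h (\<i> *s X) (\<i> *s Y)) / 2"

text \<open>Sesquilinear form associated with a J-invariant real form T, with the same
  convention as g(X, conj Y) = <X,Y> + i <X,JY>.\<close>

definition hcf_tensor ::
  "('n::finite cvec \<Rightarrow> 'n cvec \<Rightarrow> 'n cvec) \<Rightarrow> ('n cvec \<Rightarrow> 'n cvec \<Rightarrow> complex) \<Rightarrow> 'n cvec \<Rightarrow> 'n cvec \<Rightarrow> complex" where
  "hcf_tensor br h X Y =
     complex_of_real (ricci11 br h X Y) + \<i> * complex_of_real (ricci11 br h X (\<i> *s Y))
     + (1/2) * complex_trace (br X) * cnj (complex_trace (br Y))"

definition hcf_operator ::
  "('n::finite cvec \<Rightarrow> 'n cvec \<Rightarrow> 'n cvec) \<Rightarrow> ('n cvec \<Rightarrow> 'n cvec \<Rightarrow> complex) \<Rightarrow> 'n cvec \<Rightarrow> 'n cvec" where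
  "hcf_operator br h = (THE T. \<forall>X Y. h (T X) Y = hcf_tensor br h X Y)"

definition h_adjoint ::
  "('n::finite cvec \<Rightarrow> 'n cvec \<Rightarrow> complex) \<Rightarrow> ('n cvec \<Rightarrow> 'n cvec) \<Rightarrow> 'n cvec \<Rightarrow> 'n cvec" where
  "h_adjoint h D = (THE E. \<forall>X Y. h (E X) Y = h X (D Y))"

definition complex_linear :: "('n::finite cvec \<Rightarrow> 'n cvec) \<Rightarrow> bool" where
  "complex_linear f \<longleftrightarrow> (\<forall>X Y. f (X + Y) = f X + f Y) \<and> (\<forall>a X. f (a *s X) = a *s f X)"

definition derivation :: "('n::finite cvec \<Rightarrow> 'n cvec \<Rightarrow> 'n cvec) \<Rightarrow> ('n cvec \<Rightarrow> 'n cvec) \<Rightarrow> bool" where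
  "derivation br D \<longleftrightarrow> complex_linear D \<and> (\<forall>X Y. D (br X Y) = br (D X) Y + br X (D Y))"

definition expanding_alg_soliton ::
  "('n::finite cvec \<Rightarrow> 'n cvec \<Rightarrow> 'n cvec) \<Rightarrow> ('n cvec \<Rightarrow> 'n cvec \<Rightarrow> complex) \<Rightarrow> bool" where
  "expanding_alg_soliton br h \<longleftrightarrow>
     (\<exists>c::real. \<exists>D. c < 0 \<and> derivation br D \<and> derivation br (h_adjoint h D) \<and>
        hcf_operator br h = (\<lambda>X. complex_of_real c *s X + (1/2 :: complex) *s (D X + h_adjoint h D X)))"

definition lie_automorphism :: "('n::finite cvec \<Rightarrow> 'n cvec \<Rightarrow> 'n cvec) \<Rightarrow> ('n cvec \<Rightarrow> 'n cvec) \<Rightarrow> bool" where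
  "lie_automorphism br \<phi> \<longleftrightarrow> bij \<phi> \<and> complex_linear \<phi> \<and> (\<forall>X Y. \<phi> (br X Y) = br (\<phi> X) (\<phi> Y))"

definition homothetically_equivalent ::
  "('n::finite cvec \<Rightarrow> 'n cvec \<Rightarrow> 'n cvec) \<Rightarrow> ('n cvec \<Rightarrow> 'n cvec \<Rightarrow> complex) \<Rightarrow> ('n cvec \<Rightarrow> 'n cvec \<Rightarrow> complex) \<Rightarrow> bool" where
  "homothetically_equivalent br h1 h2 \<longleftrightarrow>
     (\<exists>k::real. \<exists>\<phi>. k > 0 \<and> lie_automorphism br \<phi> \<and>
        (\<forall>X Y. h1 X Y = complex_of_real k * h2 (\<phi> X) (\<phi> Y)))"

text \<open>[Z1,Z2]=Z3, [Z1,Z3]=Z4, [Z1,Z4]=Z2, other brackets of basis vectors zero.\<close>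

definition br_g4 :: "idx4 cvec \<Rightarrow> idx4 cvec \<Rightarrow> idx4 cvec" where
  "br_g4 X Y = (\<chi> k. case k of
       I1 \<Rightarrow> 0
     | I2 \<Rightarrow> X$I1 * Y$I4 - X$I4 * Y$I1
     | I3 \<Rightarrow> X$I1 * Y$I2 - X$I2 * Y$I1
     | I4 \<Rightarrow> X$I1 * Y$I3 - X$I3 * Y$I1)"

definition Zb :: "idx4 \<Rightarrow> idx4 cvec" where
  "Zb k = axis k 1"

end

theory Submission
  imports Defs
begin

text \<open>
  Choose an \<open>h\<close>-orthonormal basis \<open>E\<^sub>1, \<dots>, E\<^sub>4\<close> of \<open>g\<^sub>4\<close> such that
  \<open>E\<^sub>2, E\<^sub>3, E\<^sub>4\<close> span the ideal \<open>n = span {Z\<^sub>2, Z\<^sub>3, Z\<^sub>4}\<close>. In these coordinates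
  \<open>(g\<^sub>4, h)\<close> becomes \<open>\<complex> e\<^sub>1 \<ltimes>\<^sub>M \<complex>\<^sup>3\<close> with the standard Hermitian product,
  where \<open>M\<close> is the matrix of \<open>ad E\<^sub>1\<close> on \<open>n\<close>: it has trace zero and \<open>M\<^sup>3\<close> is a
  nonzero scalar, since \<open>(ad Z\<^sub>1)\<^sup>3\<close> is the identity on \<open>n\<close>. The HCF operator of such a
  model is computed explicitly; on \<open>n\<close> it is the self-commutator \<open>[M, M\<^sup>*]\<close>.
  Every derivation preserves \<open>n\<close> and commutes with \<open>M\<close> there, so for a soliton
  \<open>[M, M\<^sup>*]\<close> commutes with \<open>M\<close>, which forces \<open>M\<close> to be normal.
  Normality of \<open>M\<close> means that the eigenvectors of \<open>ad Z\<^sub>1\<close> on \<open>n\<close> (the eigenvalues are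
  the cube roots of unity) are \<open>h\<close>-orthogonal. Then \<open>ad Z\<^sub>1\<close> is an \<open>h\<close>-isometry of \<open>n\<close>,
  \<open>M\<^sup>* M\<close> is a positive multiple \<open>r\<close> of the identity on \<open>n\<close>, and the HCF operator is
  \<open>-3r + D\<close> for the derivation \<open>D\<close> that is \<open>3r\<close> on \<open>n\<close> and \<open>0\<close> on \<open>e\<^sub>1\<close>.
  Rescaling the three eigenvectors is an automorphism of \<open>g\<^sub>4\<close> that brings such an \<open>h\<close>
  to the normal form. Conversely, \<open>ad Z\<^sub>1\<close> is an isometry of \<open>n\<close> for a metric in normal
  form, so its eigenvectors are orthogonal, and this survives pulling back by automorphisms,
  which only rescale \<open>ad Z\<^sub>1\<close> on \<open>n\<close>.
\<close>

lemma all_idx4: "(\<forall>k::idx4. P k) \<longleftrightarrow> P I1 \<and> P I2 \<and> P I3 \<and> P I4"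
  by (metis idx4.exhaust)

lemma vec_eq_idx4: "(x::'a^idx4) = y \<longleftrightarrow> x$I1 = y$I1 \<and> x$I2 = y$I2 \<and> x$I3 = y$I3 \<and> x$I4 = y$I4"
  by (simp add: vec_eq_iff all_idx4)

lemma sum_idx4: "(\<Sum>k\<in>UNIV. f k) = f I1 + f I2 + f I3 + f I4"
  by (simp add: UNIV_idx4 add.assoc)

lemma axis_component: "axis k a $ j = (if j = k then a else 0)"
  by (simp add: axis_def)

lemma scaleR_cvec: "r *\<^sub>R (x :: 'n::finite cvec) = complex_of_real r *s x"
  by (simp add: vec_eq_iff scaleR_conv_of_real[where 'a=complex])

lemma scale_Re_Im: "c *s x = Re c *\<^sub>R x + Im c *\<^sub>R (\<i> *s (x :: 'n::finite cvec))"
  by (simp add: vec_eq_iff scaleR_conv_of_real[where 'a=complex] complex_eq_iff)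

lemma of_real_Re: "complex_of_real (Re z) = (z + cnj z) / 2"
  by (simp add: complex_add_cnj)

context
  fixes f :: "'n::finite cvec \<Rightarrow> 'n cvec"
  assumes f: "complex_linear f"
begin

lemma complex_linear_add: "f (x + y) = f x + f y"
  using f unfolding complex_linear_def by blast

lemma complex_linear_scale: "f (c *s x) = c *s f x"
  using f unfolding complex_linear_def by blast

lemma complex_linear_zero: "f 0 = 0"
  using complex_linear_scale[of 0 0] by simp

lemma complex_linear_diff: "f (x - y) = f x - f y"
  using complex_linear_add[of "x - y" y] by (simp add: algebra_simps)

lemma complex_linear_imp_linear: "linear f"
  by (rule linearI) (simp_all add: complex_linear_add complex_linear_scale scaleR_cvec)

end

lemma complex_linear_compose:
  "complex_linear f \<Longrightarrow> complex_linear g \<Longrightarrow> complex_linear (\<lambda>x. f (g x))"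
  by (simp add: complex_linear_def)

lemma complex_linear_inverse:
  assumes "complex_linear f" and "\<And>x. g (f x) = x" and "\<And>y. f (g y) = y"
  shows "complex_linear g"
  unfolding complex_linear_def
  by (metis assms complex_linear_add complex_linear_scale)

lemma derivation_complex_linear: "derivation br D \<Longrightarrow> complex_linear D"
  by (simp add: derivation_def)

lemma derivation_leibniz: "derivation br D \<Longrightarrow> D (br x y) = br (D x) y + br x (D y)"
  by (simp add: derivation_def)

context
  fixes h :: "'n::finite cvec \<Rightarrow> 'n cvec \<Rightarrow> complex"
  assumes h: "hermitian_ip h"
begin

lemma hermitian_ip_add_left: "h (a + b) c = h a c + h b c"
  using h unfolding hermitian_ip_def by blast

lemma hermitian_ip_scale_left: "h (s *s a) c = s * h a c"
  using h unfolding hermitian_ip_def by blast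

lemma hermitian_ip_cnj: "h b a = cnj (h a b)"
  using h unfolding hermitian_ip_def by blast

lemma hermitian_ip_pos: "a \<noteq> 0 \<Longrightarrow> Re (h a a) > 0"
  using h unfolding hermitian_ip_def by blast

lemma hermitian_ip_add_right: "h c (a + b) = h c a + h c b"
  by (metis hermitian_ip_cnj hermitian_ip_add_left complex_cnj_add)

lemma hermitian_ip_scale_right: "h a (s *s c) = cnj s * h a c"
  by (metis hermitian_ip_cnj hermitian_ip_scale_left complex_cnj_mult complex_cnj_cnj)

lemma hermitian_ip_diff_left: "h (a - b) c = h a c - h b c"
  by (metis hermitian_ip_add_left diff_add_cancel add_diff_cancel)

lemma hermitian_ip_diff_right: "h c (a - b) = h c a - h c b"
  by (metis hermitian_ip_cnj hermitian_ip_diff_left complex_cnj_diff)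

lemma hermitian_ip_zero_left: "h 0 c = 0"
  using hermitian_ip_scale_left[of 0 c c] by simp

lemma hermitian_ip_zero_right: "h c 0 = 0"
  using hermitian_ip_scale_right[of c 0 c] by simp

lemma hermitian_ip_minus_left: "h (- a) c = - h a c"
  using hermitian_ip_scale_left[of "-1" a c] by simp

lemma hermitian_ip_minus_right: "h c (- a) = - h c a"
  using hermitian_ip_scale_right[of c "-1" a] by simp

lemmas hermitian_ip_simps = hermitian_ip_add_left hermitian_ip_scale_left hermitian_ip_add_right
  hermitian_ip_scale_right hermitian_ip_diff_left hermitian_ip_diff_right
  hermitian_ip_zero_left hermitian_ip_zero_right hermitian_ip_minus_left hermitian_ip_minus_right

lemma hermitian_ip_diag_real: "h a a = complex_of_real (Re (h a a))"
  using hermitian_ip_cnj[of a a] by (simp add: complex_eq_iff)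

lemma hermitian_ip_eq_0_iff: "Re (h a a) = 0 \<longleftrightarrow> a = 0"
  using hermitian_ip_pos[of a] hermitian_ip_zero_left[of 0] by fastforce

lemma hermitian_ip_eqI: "(\<And>y. h a y = h b y) \<Longrightarrow> a = b"
  using hermitian_ip_eq_0_iff[of "a - b"] by (simp add: hermitian_ip_diff_left)

lemma levi_civita_eqI:
  assumes "\<And>Z. 2 * riem h W Z = riem h (br X Y) Z - riem h (br Y Z) X + riem h (br Z X) Y"
  shows "levi_civita br h X Y = W"
  unfolding levi_civita_def
proof (rule the_equality)
  fix W'
  assume W': "\<forall>Z. 2 * riem h W' Z = riem h (br X Y) Z - riem h (br Y Z) X + riem h (br Z X) Y"
  have "Re (h (W' - W) (W' - W)) = 0"
    using W'[rule_format, of "W' - W"] assms[of "W' - W"]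
    by (simp add: hermitian_ip_diff_left riem_def)
  then show "W' = W" by (simp add: hermitian_ip_eq_0_iff)
qed (use assms in blast)

lemma h_adjoint_eqI:
  assumes "\<And>X Y. h (E X) Y = h X (D Y)"
  shows "h_adjoint h D = E"
  unfolding h_adjoint_def
  by (rule the_equality) (use assms in \<open>auto intro!: ext hermitian_ip_eqI\<close>)

lemma hcf_operator_eqI:
  assumes "\<And>X Y. h (K X) Y = hcf_tensor br h X Y"
  shows "hcf_operator br h = K"
  unfolding hcf_operator_def
  by (rule the_equality) (use assms in \<open>auto intro!: ext hermitian_ip_eqI\<close>)

end

lemma hermitian_ip_pullback:
  fixes h :: "'n::finite cvec \<Rightarrow> 'n cvec \<Rightarrow> complex" and f :: "'n cvec \<Rightarrow> 'n cvec"
  assumes h: "hermitian_ip h" and f: "complex_linear f" and "inj f"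
  shows "hermitian_ip (\<lambda>x y. h (f x) (f y))"
  unfolding hermitian_ip_def
proof (intro conjI allI impI)
  fix X Y Z :: "'n cvec" and c :: complex
  show "h (f (X + Y)) (f Z) = h (f X) (f Z) + h (f Y) (f Z)"
    by (simp add: complex_linear_add[OF f] hermitian_ip_add_left[OF h])
  show "h (f (c *s X)) (f Y) = c * h (f X) (f Y)"
    by (simp add: complex_linear_scale[OF f] hermitian_ip_scale_left[OF h])
  show "h (f Y) (f X) = cnj (h (f X) (f Y))"
    by (rule hermitian_ip_cnj[OF h])
  assume "X \<noteq> 0"
  then have "f X \<noteq> 0"
    using \<open>inj f\<close> complex_linear_zero[OF f] by (metis injD)
  then show "Re (h (f X) (f X)) > 0"
    by (rule hermitian_ip_pos[OF h])
qed

lemma normal_eigenvectors_orthogonal: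
  fixes A B :: "'n::finite cvec \<Rightarrow> 'n cvec"
  assumes h: "hermitian_ip h" and B: "complex_linear B"
    and adjoint: "\<And>x y. h (A x) y = h x (B y)" and normal: "\<And>x. A (B x) = B (A x)"
    and v: "A v = a *s v" and w: "A w = b *s w" and "a \<noteq> b"
  shows "h v w = 0"
proof -
  have B_eigen: "B u = cnj c *s u" if u: "A u = c *s u" for u c
  proof -
    have "h (B u) (B u) = c * h (B u) u"
      using adjoint[of "B u" u] by (simp add: normal u complex_linear_scale[OF B]
          hermitian_ip_scale_left[OF h])
    moreover have "h u (B u) = c * h u u"
      using adjoint[of u u] by (simp add: u hermitian_ip_scale_left[OF h])
    ultimately have "h (B u - cnj c *s u) (B u - cnj c *s u) = 0"
      by (simp add: hermitian_ip_simps[OF h] hermitian_ip_cnj[OF h, of u "B u"] algebra_simps)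
    then show ?thesis
      using hermitian_ip_eq_0_iff[OF h, of "B u - cnj c *s u"] by simp
  qed
  have "a * h v w = h (A v) w"
    by (simp add: v hermitian_ip_scale_left[OF h])
  also have "\<dots> = b * h v w"
    by (simp add: adjoint B_eigen[OF w] hermitian_ip_scale_right[OF h])
  finally show ?thesis
    using \<open>a \<noteq> b\<close> by (simp add: algebra_simps)
qed

definition h_normalize :: "('n::finite cvec \<Rightarrow> 'n cvec \<Rightarrow> complex) \<Rightarrow> 'n cvec \<Rightarrow> 'n cvec" where
  "h_normalize h w = complex_of_real (1 / sqrt (Re (h w w))) *s w"

context
  fixes h :: "'n::finite cvec \<Rightarrow> 'n cvec \<Rightarrow> complex"
  assumes h: "hermitian_ip h"
begin

lemma h_normalize_unit:
  assumes "w \<noteq> 0"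
  shows "h (h_normalize h w) (h_normalize h w) = 1"
proof -
  define r where "r = sqrt (Re (h w w))"
  have "r > 0"
    using hermitian_ip_pos[OF h assms] by (simp add: r_def)
  moreover have "h w w = complex_of_real (r * r)"
    using hermitian_ip_pos[OF h assms] by (subst hermitian_ip_diag_real[OF h]) (simp add: r_def)
  ultimately show ?thesis
    by (simp add: h_normalize_def hermitian_ip_scale_left[OF h] hermitian_ip_scale_right[OF h]
        flip: r_def)
qed

lemma h_normalize_left:
  "h (h_normalize h w) x = complex_of_real (1 / sqrt (Re (h w w))) * h w x"
  by (simp add: h_normalize_def hermitian_ip_scale_left[OF h])

lemma h_normalize_component_eq_0: "w $ k = 0 \<Longrightarrow> h_normalize h w $ k = 0"
  by (simp add: h_normalize_def)

lemma h_normalize_component_neq_0: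
  assumes "w $ k \<noteq> 0"
  shows "h_normalize h w $ k \<noteq> 0"
proof -
  have "Re (h w w) > 0"
    using assms by (intro hermitian_ip_pos[OF h]) auto
  then show ?thesis
    using assms by (simp add: h_normalize_def)
qed

end

definition std_ip :: "'n::finite cvec \<Rightarrow> 'n cvec \<Rightarrow> complex" where
  "std_ip x y = (\<Sum>k\<in>UNIV. x$k * cnj (y$k))"

lemma hermitian_std_ip: "hermitian_ip std_ip"
  unfolding hermitian_ip_def
proof (intro conjI allI impI)
  fix X Y Z :: "'n::finite cvec" and a :: complex
  show "std_ip (X + Y) Z = std_ip X Z + std_ip Y Z"
    by (simp add: std_ip_def sum.distrib distrib_right)
  show "std_ip (a *s X) Y = a * std_ip X Y"
    by (simp add: std_ip_def sum_distrib_left mult.assoc)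
  show "std_ip Y X = cnj (std_ip X Y)"
    by (simp add: std_ip_def mult.commute)
  assume "X \<noteq> 0"
  then obtain k where k: "X$k \<noteq> 0" by (metis vec_eq_iff zero_index)
  have "Re (std_ip X X) = (\<Sum>j\<in>UNIV. (cmod (X$j))^2)"
    by (simp add: std_ip_def complex_mult_cnj cmod_def)
  also have "\<dots> \<ge> (cmod (X$k))^2"
    by (rule member_le_sum) auto
  finally show "Re (std_ip X X) > 0"
    using k by (smt (verit) zero_less_power2 norm_eq_zero)
qed

lemma std_ip_axis_right: "std_ip x (axis k 1) = x$k"
  by (simp add: std_ip_def axis_component if_distrib cong: if_cong)

lemma std_ip_idx4:
  "std_ip x y = x$I1 * cnj (y$I1) + x$I2 * cnj (y$I2) + x$I3 * cnj (y$I3) + x$I4 * cnj (y$I4)"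
  by (simp add: std_ip_def sum_idx4)

lemma std_ip_adjoint:
  fixes D :: "idx4 cvec \<Rightarrow> idx4 cvec"
  assumes D: "complex_linear D"
  shows "std_ip (h_adjoint std_ip D X) Y = std_ip X (D Y)"
proof -
  define E where "E X = (\<chi> k. \<Sum>j\<in>UNIV. X$j * cnj (D (axis k 1) $ j))" for X
  have decomp: "D Y = Y$I1 *s D (axis I1 1) + Y$I2 *s D (axis I2 1) + Y$I3 *s D (axis I3 1)
      + Y$I4 *s D (axis I4 1)" for Y
  proof -
    have "Y = Y$I1 *s axis I1 1 + Y$I2 *s axis I2 1 + Y$I3 *s axis I3 1 + Y$I4 *s axis I4 1"
      by (simp add: vec_eq_idx4 axis_component)
    then show ?thesis
      by (metis complex_linear_add[OF D] complex_linear_scale[OF D])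
  qed
  have adjoint: "std_ip (E X) Y = std_ip X (D Y)" for X Y
    by (subst decomp) (simp add: E_def std_ip_idx4 sum_idx4 algebra_simps)
  then have "h_adjoint std_ip D = E"
    by (rule h_adjoint_eqI[OF hermitian_std_ip])
  then show ?thesis
    by (simp add: adjoint)
qed

definition sesquilinear :: "('n::finite cvec \<Rightarrow> 'n cvec \<Rightarrow> complex) \<Rightarrow> bool" where
  "sesquilinear F \<longleftrightarrow>
     (\<forall>c x x' y. F (c *s x + x') y = c * F x y + F x' y) \<and>
     (\<forall>c x y y'. F x (c *s y + y') = cnj c * F x y + F x y')"

context
  fixes F :: "'n::finite cvec \<Rightarrow> 'n cvec \<Rightarrow> complex"
  assumes F: "sesquilinear F"
begin

lemma sesquilinear_left: "F (c *s x + x') y = c * F x y + F x' y"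
  using F unfolding sesquilinear_def by blast

lemma sesquilinear_right: "F x (c *s y + y') = cnj c * F x y + F x y'"
  using F unfolding sesquilinear_def by blast

lemma sesquilinear_zero_left: "F 0 y = 0"
  using sesquilinear_left[of 1 0 0 y] by simp

lemma sesquilinear_zero_right: "F x 0 = 0"
  using sesquilinear_right[of x 1 0 0] by simp

lemma sesquilinear_add_left: "F (x + x') y = F x y + F x' y"
  using sesquilinear_left[of 1 x x' y] by simp

lemma sesquilinear_add_right: "F x (y + y') = F x y + F x y'"
  using sesquilinear_right[of x 1 y y'] by simp

lemma sesquilinear_scale_left: "F (c *s x) y = c * F x y"
  using sesquilinear_left[of c x 0 y] by (simp add: sesquilinear_zero_left)

lemma sesquilinear_scale_right: "F x (c *s y) = cnj c * F x y"
  using sesquilinear_right[of x c y 0] by (simp add: sesquilinear_zero_right)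

lemma sesquilinear_sum_left: "F (\<Sum>k\<in>A. f k) y = (\<Sum>k\<in>A. F (f k) y)"
  by (induction A rule: infinite_finite_induct)
    (simp_all add: sesquilinear_zero_left sesquilinear_add_left)

lemma sesquilinear_sum_right: "F x (\<Sum>k\<in>A. f k) = (\<Sum>k\<in>A. F x (f k))"
  by (induction A rule: infinite_finite_induct)
    (simp_all add: sesquilinear_zero_right sesquilinear_add_right)

end

lemma sesquilinear_eqI:
  fixes F G :: "'n::finite cvec \<Rightarrow> 'n cvec \<Rightarrow> complex"
  assumes F: "sesquilinear F" and G: "sesquilinear G"
    and axis: "\<And>i j. F (axis i 1) (axis j 1) = G (axis i 1) (axis j 1)"
  shows "F = G"
proof (intro ext)
  fix x y :: "'n::finite cvec"
  have "F x y = F (\<Sum>i\<in>UNIV. x$i *s axis i 1) (\<Sum>j\<in>UNIV. y$j *s axis j 1)"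
    by (simp add: basis_expansion)
  also have "\<dots> = G (\<Sum>i\<in>UNIV. x$i *s axis i 1) (\<Sum>j\<in>UNIV. y$j *s axis j 1)"
    by (simp add: sesquilinear_sum_left sesquilinear_sum_right sesquilinear_scale_left
        sesquilinear_scale_right F G axis)
  finally show "F x y = G x y"
    by (simp add: basis_expansion)
qed

lemma sesquilinear_hermitian_ip: "hermitian_ip h \<Longrightarrow> sesquilinear h"
  by (simp add: sesquilinear_def hermitian_ip_simps)

lemma sesquilinear_compose_left:
  "sesquilinear F \<Longrightarrow> complex_linear K \<Longrightarrow> sesquilinear (\<lambda>x y. F (K x) y)"
  by (simp add: sesquilinear_def complex_linear_add complex_linear_scale sesquilinear_add_left
      sesquilinear_scale_left)

lemma real_trace_alt:
  "real_trace f = Re (\<Sum>k\<in>UNIV. f (axis k 1) $ k - \<i> * f (axis k \<i>) $ k)"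
  by (simp add: real_trace_def)

lemma real_trace_add: "real_trace (\<lambda>x. f x + g x) = real_trace f + real_trace g"
  by (simp add: real_trace_def sum.distrib algebra_simps)

lemma real_trace_scaleR: "real_trace (\<lambda>x. r *\<^sub>R f x) = r * real_trace f"
  by (simp add: real_trace_def sum_distrib_left algebra_simps)

lemma real_trace_Basis:
  fixes f :: "'n::finite cvec \<Rightarrow> 'n cvec"
  shows "real_trace f = (\<Sum>b\<in>Basis. f b \<bullet> b)"
proof -
  have "(\<Union>u\<in>Basis. {axis i u}) = axis i ` (Basis :: complex set)" for i :: 'n
    by auto
  then have "(\<Sum>b\<in>Basis. f b \<bullet> b) = (\<Sum>i\<in>UNIV. \<Sum>u\<in>Basis. f (axis i u) \<bullet> axis i u)"
    unfolding Basis_vec_def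
    by (subst sum.UNION_disjoint) (auto simp: axis_eq_axis sum.reindex inj_on_def)
  then show ?thesis
    by (simp add: real_trace_def Basis_complex_def inner_axis inner_complex_def)
qed

lemma trace_compose_comm:
  fixes f g :: "'a::euclidean_space \<Rightarrow> 'a"
  assumes f: "linear f" and g: "linear g"
  shows "(\<Sum>b\<in>Basis. f (g b) \<bullet> b) = (\<Sum>b\<in>Basis. g (f b) \<bullet> b)"
proof -
  have expand: "p (q b) \<bullet> b = (\<Sum>c\<in>Basis. (q b \<bullet> c) * (p c \<bullet> b))" if "linear p"
    for p q :: "'a \<Rightarrow> 'a" and b
  proof -
    have "p (q b) = p (\<Sum>c\<in>Basis. (q b \<bullet> c) *\<^sub>R c)"
      by (simp add: euclidean_representation)
    also have "\<dots> = (\<Sum>c\<in>Basis. (q b \<bullet> c) *\<^sub>R p c)"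
      by (simp add: linear_sum[OF that] linear_cmul[OF that])
    finally show ?thesis
      by (simp add: inner_sum_left)
  qed
  have "(\<Sum>b\<in>Basis. f (g b) \<bullet> b) = (\<Sum>b\<in>Basis. \<Sum>c\<in>Basis. (g b \<bullet> c) * (f c \<bullet> b))"
    by (simp add: expand[OF f])
  also have "\<dots> = (\<Sum>c\<in>Basis. \<Sum>b\<in>Basis. (f c \<bullet> b) * (g b \<bullet> c))"
    by (subst sum.swap) (simp add: mult.commute)
  also have "\<dots> = (\<Sum>c\<in>Basis. g (f c) \<bullet> c)"
    by (simp add: expand[OF g])
  finally show ?thesis .
qed

lemma real_trace_conj:
  fixes T Ti f :: "'n::finite cvec \<Rightarrow> 'n cvec"
  assumes "linear T" and "linear Ti" and "\<And>x. Ti (T x) = x" and "linear f"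
  shows "real_trace (\<lambda>x. T (f (Ti x))) = real_trace f"
  using trace_compose_comm[OF \<open>linear T\<close> linear_compose[OF \<open>linear Ti\<close> \<open>linear f\<close>]] assms(3)
  by (simp add: real_trace_Basis o_def)

lemma complex_trace_eq_real_trace:
  fixes f :: "'n::finite cvec \<Rightarrow> 'n cvec"
  assumes "complex_linear f"
  shows "complex_trace f
    = (complex_of_real (real_trace f) - \<i> * complex_of_real (real_trace (\<lambda>x. \<i> *s f x))) / 2"
proof -
  have "axis k \<i> = \<i> *s (axis k 1 :: 'n cvec)" for k
    by (simp add: vec_eq_iff axis_def)
  then have "f (axis k \<i>) = \<i> *s f (axis k 1)" for k
    by (simp add: complex_linear_scale[OF assms])
  then show ?thesis
    by (simp add: complex_trace_def real_trace_def complex_eq_iff sum.distrib sum_negf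
        sum_distrib_left algebra_simps)
qed

lemma hcf_tensor_sesquilinear:
  fixes br :: "'n::finite cvec \<Rightarrow> 'n cvec \<Rightarrow> 'n cvec"
  assumes R: "bilinear (ricci br h)"
    and tr: "\<And>c x y.
      complex_trace (br (c *s x + y)) = c * complex_trace (br x) + complex_trace (br y)"
  shows "sesquilinear (hcf_tensor br h)"
proof -
  define t where "t x = complex_trace (br x)" for x
  have ii: "\<i> *s (\<i> *s x) = - x" for x :: "'n cvec"
    by (simp add: vec_eq_iff)
  have t0: "t 0 = 0"
    using tr[of 1 0 0] by (simp add: t_def)
  have t_add: "t (x + y) = t x + t y" and t_scale: "t (c *s x) = c * t x" for c x y
    using tr[of 1 x y] tr[of c x 0] t0 by (simp_all add: t_def)
  then have t_scaleR: "t (r *\<^sub>R x) = of_real r * t x" for r x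
    by (simp add: scaleR_cvec)
  have H: "hcf_tensor br h x y
      = of_real ((ricci br h x y + ricci br h (\<i> *s x) (\<i> *s y)) / 2)
        + \<i> * of_real ((ricci br h x (\<i> *s y) - ricci br h (\<i> *s x) y) / 2)
        + 1/2 * t x * cnj (t y)" for x y
    by (simp add: hcf_tensor_def ricci11_def ii bilinear_rneg[OF R] t_def)
  have i_scaleR: "\<i> *s (r *\<^sub>R x) = r *\<^sub>R (\<i> *s x)" for r and x :: "'n cvec"
    by (simp add: vec_eq_iff)
  note R_lin = bilinear_ladd[OF R] bilinear_radd[OF R] bilinear_lmul[OF R] bilinear_rmul[OF R]
    bilinear_lneg[OF R] bilinear_rneg[OF R]
  have add_left: "hcf_tensor br h (x + x') y = hcf_tensor br h x y + hcf_tensor br h x' y"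
    and add_right: "hcf_tensor br h x (y + y') = hcf_tensor br h x y + hcf_tensor br h x y'"
    for x x' y y'
    by (simp_all add: H vector_add_ldistrib R_lin t_add algebra_simps
        add_divide_distrib diff_divide_distrib)
  have scaleR_left: "hcf_tensor br h (r *\<^sub>R x) y = of_real r * hcf_tensor br h x y"
    and scaleR_right: "hcf_tensor br h x (r *\<^sub>R y) = of_real r * hcf_tensor br h x y" for r x y
    by (simp_all add: H i_scaleR R_lin t_scaleR algebra_simps)
  have i_left: "hcf_tensor br h (\<i> *s x) y = \<i> * hcf_tensor br h x y"
    and i_right: "hcf_tensor br h x (\<i> *s y) = - \<i> * hcf_tensor br h x y" for x y
    by (simp_all add: H ii R_lin t_scale algebra_simps)
  have "hcf_tensor br h (c *s x) y = c * hcf_tensor br h x y"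
    and "hcf_tensor br h x (c *s y) = cnj c * hcf_tensor br h x y" for c x y
    by (simp_all add: scale_Re_Im[of c] add_left add_right scaleR_left scaleR_right i_left i_right
        complex_eq_iff algebra_simps)
  then show ?thesis
    by (simp add: sesquilinear_def add_left add_right)
qed

section \<open>The Lie algebras \<open>\<complex> e\<^sub>1 \<ltimes>\<^sub>M \<complex>\<^sup>3\<close>\<close>

definition proj_n :: "idx4 cvec \<Rightarrow> idx4 cvec" where
  "proj_n x = (\<chi> k. if k = I1 then 0 else x$k)"

definition mat_n :: "(idx4 \<Rightarrow> idx4 \<Rightarrow> complex) \<Rightarrow> idx4 cvec \<Rightarrow> idx4 cvec" where
  "mat_n m x = (\<chi> k. if k = I1 then 0 else m k I2 * x$I2 + m k I3 * x$I3 + m k I4 * x$I4)"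

definition mat_n_adj :: "(idx4 \<Rightarrow> idx4 \<Rightarrow> complex) \<Rightarrow> idx4 cvec \<Rightarrow> idx4 cvec" where
  "mat_n_adj m x =
     (\<chi> k. if k = I1 then 0 else cnj (m I2 k) * x$I2 + cnj (m I3 k) * x$I3 + cnj (m I4 k) * x$I4)"

definition trace_n :: "(idx4 \<Rightarrow> idx4 \<Rightarrow> complex) \<Rightarrow> complex" where
  "trace_n m = m I2 I2 + m I3 I3 + m I4 I4"

text \<open>The matrix \<open>m\<close> acts as \<open>ad e\<^sub>1\<close> on the abelian ideal \<open>span {e\<^sub>2, e\<^sub>3, e\<^sub>4}\<close>.\<close>

definition semidirect_br :: "(idx4 \<Rightarrow> idx4 \<Rightarrow> complex) \<Rightarrow> idx4 cvec \<Rightarrow> idx4 cvec \<Rightarrow> idx4 cvec" where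
  "semidirect_br m x y = x$I1 *s mat_n m y - y$I1 *s mat_n m x"

definition semidirect_ad_adj :: "(idx4 \<Rightarrow> idx4 \<Rightarrow> complex) \<Rightarrow> idx4 cvec \<Rightarrow> idx4 cvec \<Rightarrow> idx4 cvec" where
  "semidirect_ad_adj m x y = cnj (x$I1) *s mat_n_adj m y - std_ip y (mat_n m x) *s axis I1 1"

definition semidirect_lc :: "(idx4 \<Rightarrow> idx4 \<Rightarrow> complex) \<Rightarrow> idx4 cvec \<Rightarrow> idx4 cvec \<Rightarrow> idx4 cvec" where
  "semidirect_lc m x y =
     (1/2) *s (semidirect_br m x y - semidirect_ad_adj m x y - semidirect_ad_adj m y x)"

definition semidirect_curv ::
  "(idx4 \<Rightarrow> idx4 \<Rightarrow> complex) \<Rightarrow> idx4 cvec \<Rightarrow> idx4 cvec \<Rightarrow> idx4 cvec \<Rightarrow> idx4 cvec" where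
  "semidirect_curv m x y z = semidirect_lc m x (semidirect_lc m y z)
     - semidirect_lc m y (semidirect_lc m x z) - semidirect_lc m (semidirect_br m x y) z"

definition hcf_e1_coeff :: "(idx4 \<Rightarrow> idx4 \<Rightarrow> complex) \<Rightarrow> complex" where
  "hcf_e1_coeff m = trace_n m * cnj (trace_n m) / 2
     - (\<Sum>k\<in>{I2,I3,I4}. \<Sum>j\<in>{I2,I3,I4}. m k j * cnj (m k j))"

definition semidirect_hcf :: "(idx4 \<Rightarrow> idx4 \<Rightarrow> complex) \<Rightarrow> idx4 cvec \<Rightarrow> idx4 cvec" where
  "semidirect_hcf m x = (hcf_e1_coeff m * x$I1) *s axis I1 1
     + (mat_n m (mat_n_adj m x) - mat_n_adj m (mat_n m x)
        - trace_n m *s mat_n_adj m x - cnj (trace_n m) *s mat_n m x)"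

lemmas semidirect_defs = semidirect_br_def semidirect_ad_adj_def semidirect_lc_def
  mat_n_def mat_n_adj_def std_ip_idx4 axis_component

lemma std_ip_semidirect_ad_adj:
  "std_ip (semidirect_ad_adj m x y) z = std_ip y (semidirect_br m x z)"
  by (simp add: semidirect_defs algebra_simps)

lemma std_ip_semidirect_lc:
  "2 * Re (std_ip (semidirect_lc m x y) z) = Re (std_ip (semidirect_br m x y) z)
     - Re (std_ip (semidirect_br m y z) x) + Re (std_ip (semidirect_br m z x) y)"
proof -
  have Re_swap: "Re (std_ip a b) = Re (std_ip b a)" for a b :: "idx4 cvec"
    by (simp add: hermitian_ip_cnj[OF hermitian_std_ip, of a])
  have "2 * std_ip (semidirect_lc m x y) z = std_ip (semidirect_br m x y) z
      - std_ip y (semidirect_br m x z) - std_ip x (semidirect_br m y z)"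
    by (simp add: semidirect_lc_def hermitian_ip_simps[OF hermitian_std_ip]
        std_ip_semidirect_ad_adj)
  moreover have "semidirect_br m x z = - semidirect_br m z x"
    by (simp add: semidirect_br_def)
  ultimately have "2 * std_ip (semidirect_lc m x y) z = std_ip (semidirect_br m x y) z
      + std_ip y (semidirect_br m z x) - std_ip x (semidirect_br m y z)"
    by (simp add: hermitian_ip_minus_right[OF hermitian_std_ip])
  from arg_cong[where f = Re, OF this]
  have "2 * Re (std_ip (semidirect_lc m x y) z) = Re (std_ip (semidirect_br m x y) z)
      + Re (std_ip y (semidirect_br m z x)) - Re (std_ip x (semidirect_br m y z))"
    by simp
  then show ?thesis
    by (simp add: Re_swap[of y] Re_swap[of x])
qed

lemma levi_civita_semidirect: "levi_civita (semidirect_br m) std_ip = semidirect_lc m"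
  by (intro ext levi_civita_eqI[OF hermitian_std_ip]) (simp add: riem_def std_ip_semidirect_lc)

lemma curvature_semidirect: "curvature (semidirect_br m) std_ip = semidirect_curv m"
  by (intro ext) (simp add: curvature_def levi_civita_semidirect semidirect_curv_def)

lemma hcf_tensor_semidirect_axis:
  "hcf_tensor (semidirect_br m) std_ip (axis i 1) (axis j 1) = semidirect_hcf m (axis i 1) $ j"
  unfolding hcf_tensor_def ricci11_def ricci_def real_trace_alt complex_trace_def
    curvature_semidirect
  by (cases i; cases j; simp only: of_real_add of_real_divide of_real_Re;
      simp add: sum_idx4 semidirect_curv_def semidirect_defs semidirect_hcf_def hcf_e1_coeff_def
        trace_n_def;
      (simp add: field_simps algebra_simps)?)

lemma bilinear_semidirect_br: "bilinear (semidirect_br m)"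
  by (simp add: bilinear_def linear_iff semidirect_br_def mat_n_def vec_eq_idx4
      scaleR_conv_of_real[where 'a=complex] algebra_simps)

lemma bilinear_semidirect_lc: "bilinear (semidirect_lc m)"
  by (simp add: bilinear_def linear_iff semidirect_defs vec_eq_idx4
      scaleR_conv_of_real[where 'a=complex] algebra_simps add_divide_distrib diff_divide_distrib)

lemma bilinear_ricci_semidirect: "bilinear (ricci (semidirect_br m) std_ip)"
proof -
  note br = bilinear_semidirect_br[of m] and lc = bilinear_semidirect_lc[of m]
  have "semidirect_curv m x (y + y') z = semidirect_curv m x y z + semidirect_curv m x y' z"
    and "semidirect_curv m x y (z + z') = semidirect_curv m x y z + semidirect_curv m x y z'"
    and "semidirect_curv m x (r *\<^sub>R y) z = r *\<^sub>R semidirect_curv m x y z"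
    and "semidirect_curv m x y (r *\<^sub>R z) = r *\<^sub>R semidirect_curv m x y z" for x y y' z z' r
    by (simp_all add: semidirect_curv_def bilinear_ladd[OF lc] bilinear_radd[OF lc]
        bilinear_lmul[OF lc] bilinear_rmul[OF lc] bilinear_radd[OF br] bilinear_rmul[OF br]
        algebra_simps)
  then show ?thesis
    by (simp add: bilinear_def linear_iff ricci_def curvature_semidirect real_trace_add
        real_trace_scaleR)
qed

lemma complex_trace_semidirect: "complex_trace (semidirect_br m x) = x$I1 * trace_n m"
  by (simp add: complex_trace_def sum_idx4 semidirect_br_def mat_n_def trace_n_def axis_component
      algebra_simps)

lemma complex_linear_semidirect_hcf: "complex_linear (semidirect_hcf m)"
  by (simp add: complex_linear_def semidirect_hcf_def mat_n_def mat_n_adj_def vec_eq_idx4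
      algebra_simps)

lemma std_ip_semidirect_hcf:
  "std_ip (semidirect_hcf m x) y = hcf_tensor (semidirect_br m) std_ip x y"
proof -
  have "(\<lambda>x y. std_ip (semidirect_hcf m x) y) = hcf_tensor (semidirect_br m) std_ip"
  proof (rule sesquilinear_eqI)
    show "sesquilinear (\<lambda>x y. std_ip (semidirect_hcf m x) y)"
      by (rule sesquilinear_compose_left[OF sesquilinear_hermitian_ip[OF hermitian_std_ip]
            complex_linear_semidirect_hcf])
    show "sesquilinear (hcf_tensor (semidirect_br m) std_ip)"
      by (rule hcf_tensor_sesquilinear[OF bilinear_ricci_semidirect])
        (simp add: complex_trace_semidirect algebra_simps)
  qed (simp add: hcf_tensor_semidirect_axis std_ip_axis_right)
  then show ?thesis
    by metis
qed

lemma hcf_operator_semidirect: "hcf_operator (semidirect_br m) std_ip = semidirect_hcf m"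
  by (rule hcf_operator_eqI[OF hermitian_std_ip]) (rule std_ip_semidirect_hcf)

lemma linear_semidirect_curv_left: "linear (\<lambda>x. semidirect_curv m x y z)"
  using bilinear_semidirect_br[of m] bilinear_semidirect_lc[of m]
  by (simp add: linear_iff semidirect_curv_def bilinear_ladd bilinear_radd bilinear_lmul
      bilinear_rmul algebra_simps)

lemma complex_linear_semidirect_br: "complex_linear (semidirect_br m x)"
  by (simp add: complex_linear_def semidirect_br_def mat_n_def vec_eq_idx4 algebra_simps)

lemma mat_n_component:
  "mat_n m x $ k = (if k = I1 then 0 else \<Sum>j\<in>{I2,I3,I4}. m k j * x$j)"
  by (simp add: mat_n_def add.assoc)

lemma mat_n_adj_component:
  "mat_n_adj m x $ k = (if k = I1 then 0 else \<Sum>j\<in>{I2,I3,I4}. cnj (m j k) * x$j)"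
  by (simp add: mat_n_adj_def add.assoc)

lemma complex_linear_mat_n: "complex_linear (mat_n m)"
  by (simp add: complex_linear_def mat_n_def vec_eq_idx4 algebra_simps)

lemmas mat_n_linear = complex_linear_add[OF complex_linear_mat_n]
  complex_linear_scale[OF complex_linear_mat_n]

lemma complex_linear_mat_n_adj: "complex_linear (mat_n_adj m)"
  by (simp add: complex_linear_def mat_n_adj_def vec_eq_idx4 algebra_simps)

lemma mat_n_I1 [simp]: "mat_n m x $ I1 = 0"
  by (simp add: mat_n_def)

lemma mat_n_proj_n [simp]: "mat_n m (proj_n x) = mat_n m x"
  by (simp add: mat_n_def proj_n_def vec_eq_idx4)

lemma mat_n_adj_proj_n [simp]: "mat_n_adj m (proj_n x) = mat_n_adj m x"
  by (simp add: mat_n_adj_def proj_n_def vec_eq_idx4)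

lemma mat_n_e1 [simp]: "mat_n m (axis I1 1) = 0"
  by (simp add: mat_n_def vec_eq_idx4 axis_component)

lemma proj_n_id: "x$I1 = 0 \<Longrightarrow> proj_n x = x"
  by (simp add: proj_n_def vec_eq_idx4)

lemma std_ip_mat_n: "std_ip (mat_n m x) y = std_ip x (mat_n_adj m y)"
  by (simp add: mat_n_def mat_n_adj_def std_ip_idx4 algebra_simps)

lemma semidirect_br_I1 [simp]: "semidirect_br m x y $ I1 = 0"
  by (simp add: semidirect_br_def)

lemma semidirect_br_e1: "semidirect_br m (axis I1 1) y = mat_n m y"
  by (simp add: semidirect_br_def mat_n_def vec_eq_idx4 axis_component)

section \<open>Transport along an isometric isomorphism\<close>

locale semidirect_isometry =
  fixes h :: "idx4 cvec \<Rightarrow> idx4 cvec \<Rightarrow> complex" and br :: "idx4 cvec \<Rightarrow> idx4 cvec \<Rightarrow> idx4 cvec"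
    and m :: "idx4 \<Rightarrow> idx4 \<Rightarrow> complex" and T Ti :: "idx4 cvec \<Rightarrow> idx4 cvec"
  assumes hermitian: "hermitian_ip h" and T_linear: "complex_linear T"
    and Ti_T [simp]: "\<And>x. Ti (T x) = x" and T_Ti [simp]: "\<And>y. T (Ti y) = y"
    and T_isometry: "\<And>x y. h (T x) (T y) = std_ip x y"
    and T_bracket: "\<And>x y. br (T x) (T y) = T (semidirect_br m x y)"
begin

definition transport :: "(idx4 cvec \<Rightarrow> idx4 cvec) \<Rightarrow> idx4 cvec \<Rightarrow> idx4 cvec" where
  "transport D = (\<lambda>X. T (D (Ti X)))"

lemma Ti_linear: "complex_linear Ti"
  by (rule complex_linear_inverse[OF T_linear Ti_T T_Ti])

lemma Ti_minus: "Ti (- Y) = - Ti Y"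
  using complex_linear_scale[OF Ti_linear, of "-1" Y] by simp

lemma h_conv_std_ip: "h X Y = std_ip (Ti X) (Ti Y)"
  using T_isometry[of "Ti X" "Ti Y"] by simp

lemma br_conv_semidirect: "br X Y = T (semidirect_br m (Ti X) (Ti Y))"
  using T_bracket[of "Ti X" "Ti Y"] by simp

lemma transport_surj: "transport (\<lambda>x. Ti (D (T x))) = D"
  by (simp add: transport_def fun_eq_iff)

lemma transport_eq_iff: "transport D = transport E \<longleftrightarrow> D = E"
proof
  assume "transport D = transport E"
  then have "Ti (transport D (T x)) = Ti (transport E (T x))" for x
    by simp
  then show "D = E"
    by (simp add: transport_def fun_eq_iff)
qed simp

lemma transport_linear_combination:
  "(\<lambda>X. a *s X + b *s (transport D X + transport E X)) = transport (\<lambda>x. a *s x + b *s (D x + E x))"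
  by (simp add: transport_def fun_eq_iff complex_linear_add[OF T_linear]
      complex_linear_scale[OF T_linear])

lemma levi_civita_transport: "levi_civita br h X Y = T (semidirect_lc m (Ti X) (Ti Y))"
  by (rule levi_civita_eqI[OF hermitian])
    (simp add: riem_def h_conv_std_ip br_conv_semidirect std_ip_semidirect_lc)

lemma curvature_transport:
  "curvature br h X Y Z = T (semidirect_curv m (Ti X) (Ti Y) (Ti Z))"
  by (simp add: curvature_def levi_civita_transport br_conv_semidirect semidirect_curv_def
      complex_linear_diff[OF T_linear])

lemma ricci_transport: "ricci br h X Y = ricci (semidirect_br m) std_ip (Ti X) (Ti Y)"
  using real_trace_conj[OF complex_linear_imp_linear[OF T_linear]
      complex_linear_imp_linear[OF Ti_linear] Ti_T linear_semidirect_curv_left]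
  by (simp add: ricci_def curvature_transport curvature_semidirect)

lemma complex_trace_transport: "complex_trace (br X) = complex_trace (semidirect_br m (Ti X))"
proof -
  let ?f = "semidirect_br m (Ti X)"
  have f: "complex_linear ?f"
    by (rule complex_linear_semidirect_br)
  have br: "br X = (\<lambda>Y. T (?f (Ti Y)))"
    by (simp add: br_conv_semidirect fun_eq_iff)
  have "complex_linear (br X)"
    unfolding br complex_linear_def
    by (simp add: complex_linear_add[OF T_linear] complex_linear_scale[OF T_linear]
        complex_linear_add[OF Ti_linear] complex_linear_scale[OF Ti_linear]
        complex_linear_add[OF f] complex_linear_scale[OF f])
  then have trace: "complex_trace (br X) = (complex_of_real (real_trace (br X))
      - \<i> * complex_of_real (real_trace (\<lambda>Y. \<i> *s br X Y))) / 2"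
    by (rule complex_trace_eq_real_trace)
  have lin: "linear ?f" "linear (\<lambda>y. \<i> *s ?f y)"
    by (simp_all add: complex_linear_imp_linear f complex_linear_def complex_linear_add[OF f]
        complex_linear_scale[OF f] vector_add_ldistrib vector_smult_assoc mult.commute)
  note conj = real_trace_conj[OF complex_linear_imp_linear[OF T_linear]
      complex_linear_imp_linear[OF Ti_linear] Ti_T]
  have "real_trace (br X) = real_trace ?f"
    using conj[OF lin(1)] by (simp add: br)
  moreover have "real_trace (\<lambda>Y. \<i> *s br X Y) = real_trace (\<lambda>y. \<i> *s ?f y)"
    using conj[OF lin(2)] by (simp add: br complex_linear_scale[OF T_linear])
  ultimately show ?thesis
    by (simp add: trace complex_trace_eq_real_trace[OF f])
qed

lemma hcf_tensor_transport:
  "hcf_tensor br h X Y = hcf_tensor (semidirect_br m) std_ip (Ti X) (Ti Y)"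
  by (simp add: hcf_tensor_def ricci11_def ricci_transport complex_trace_transport
      complex_linear_scale[OF Ti_linear] Ti_minus)

lemma hcf_operator_transport: "hcf_operator br h = transport (semidirect_hcf m)"
proof (rule hcf_operator_eqI[OF hermitian])
  fix X Y
  have "h (transport (semidirect_hcf m) X) Y = std_ip (semidirect_hcf m (Ti X)) (Ti Y)"
    by (simp add: transport_def h_conv_std_ip)
  also have "\<dots> = hcf_tensor br h X Y"
    by (simp add: std_ip_semidirect_hcf hcf_tensor_transport)
  finally show "h (transport (semidirect_hcf m) X) Y = hcf_tensor br h X Y" .
qed

lemma h_adjoint_transport:
  "complex_linear D \<Longrightarrow> h_adjoint h (transport D) = transport (h_adjoint std_ip D)"
  by (rule h_adjoint_eqI[OF hermitian]) (simp add: transport_def h_conv_std_ip std_ip_adjoint)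

lemma derivation_transport: "derivation br (transport D) \<longleftrightarrow> derivation (semidirect_br m) D"
proof -
  have linear_iff: "complex_linear (transport D) \<longleftrightarrow> complex_linear D"
  proof
    assume "complex_linear (transport D)"
    from complex_linear_compose[OF Ti_linear complex_linear_compose[OF this T_linear]]
    show "complex_linear D"
      by (simp add: transport_def)
  next
    assume "complex_linear D"
    from complex_linear_compose[OF T_linear complex_linear_compose[OF this Ti_linear]]
    show "complex_linear (transport D)"
      by (simp add: transport_def)
  qed
  have "(\<forall>X Y. transport D (br X Y) = br (transport D X) Y + br X (transport D Y))
      \<longleftrightarrow> (\<forall>x y. D (semidirect_br m x y) = semidirect_br m (D x) y + semidirect_br m x (D y))"
  proof
    assume H: "\<forall>X Y. transport D (br X Y) = br (transport D X) Y + br X (transport D Y)"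
    show "\<forall>x y. D (semidirect_br m x y) = semidirect_br m (D x) y + semidirect_br m x (D y)"
    proof (intro allI)
      fix x y
      have "T (D (semidirect_br m x y)) = transport D (br (T x) (T y))"
        by (simp add: transport_def T_bracket)
      also have "\<dots> = br (transport D (T x)) (T y) + br (T x) (transport D (T y))"
        using H by blast
      also have "\<dots> = T (semidirect_br m (D x) y + semidirect_br m x (D y))"
        by (simp add: transport_def T_bracket complex_linear_add[OF T_linear])
      finally show "D (semidirect_br m x y) = semidirect_br m (D x) y + semidirect_br m x (D y)"
        by (metis Ti_T)
    qed
  next
    assume "\<forall>x y. D (semidirect_br m x y) = semidirect_br m (D x) y + semidirect_br m x (D y)"
    then show "\<forall>X Y. transport D (br X Y) = br (transport D X) Y + br X (transport D Y)"
      by (simp add: transport_def br_conv_semidirect complex_linear_add[OF T_linear])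
  qed
  with linear_iff show ?thesis
    by (simp add: derivation_def)
qed

lemma soliton_data_transport:
  "derivation br (transport D) \<and> derivation br (h_adjoint h (transport D)) \<and>
     hcf_operator br h = (\<lambda>X. c *s X + (1/2) *s (transport D X + h_adjoint h (transport D) X))
   \<longleftrightarrow> derivation (semidirect_br m) D \<and> derivation (semidirect_br m) (h_adjoint std_ip D) \<and>
     semidirect_hcf m = (\<lambda>x. c *s x + (1/2) *s (D x + h_adjoint std_ip D x))"
proof (cases "derivation (semidirect_br m) D")
  case True
  then have "complex_linear D"
    by (simp add: derivation_def)
  then show ?thesis
    by (simp only: derivation_transport h_adjoint_transport hcf_operator_transport
        transport_linear_combination transport_eq_iff)
qed (simp add: derivation_transport)

theorem soliton_transport:
  "expanding_alg_soliton br h \<longleftrightarrow> expanding_alg_soliton (semidirect_br m) std_ip"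
proof
  assume "expanding_alg_soliton br h"
  then obtain c D where "c < 0" and
    "derivation br (transport (\<lambda>x. Ti (D (T x))))"
    "derivation br (h_adjoint h (transport (\<lambda>x. Ti (D (T x)))))"
    "hcf_operator br h = (\<lambda>X. complex_of_real c *s X + (1/2) *s (transport (\<lambda>x. Ti (D (T x))) X
       + h_adjoint h (transport (\<lambda>x. Ti (D (T x)))) X))"
    unfolding expanding_alg_soliton_def transport_surj by blast
  with soliton_data_transport[where D = "\<lambda>x. Ti (D (T x))" and c = "complex_of_real c"]
  show "expanding_alg_soliton (semidirect_br m) std_ip"
    unfolding expanding_alg_soliton_def hcf_operator_semidirect by blast
next
  assume "expanding_alg_soliton (semidirect_br m) std_ip"
  then obtain c D where "c < 0" and "derivation (semidirect_br m) D"
    "derivation (semidirect_br m) (h_adjoint std_ip D)"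
    "semidirect_hcf m = (\<lambda>x. complex_of_real c *s x + (1/2) *s (D x + h_adjoint std_ip D x))"
    unfolding expanding_alg_soliton_def hcf_operator_semidirect by blast
  with soliton_data_transport[where D = D and c = "complex_of_real c"]
  show "expanding_alg_soliton br h"
    unfolding expanding_alg_soliton_def by blast
qed

end

section \<open>Solitons when \<open>M\<^sup>3\<close> is a nonzero scalar\<close>

lemma self_commutator_eq_0:
  fixes m :: "'a \<Rightarrow> 'a \<Rightarrow> complex" and A :: "'a set"
  defines "N \<equiv> \<lambda>k j. (\<Sum>l\<in>A. m k l * cnj (m j l)) - (\<Sum>l\<in>A. cnj (m l k) * m l j)"
  assumes A: "finite A"
    and comm: "\<And>k j. k \<in> A \<Longrightarrow> j \<in> A \<Longrightarrow> (\<Sum>l\<in>A. N k l * m l j) = (\<Sum>l\<in>A. m k l * N l j)"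
    and k: "k \<in> A" and j: "j \<in> A"
  shows "N k j = 0"
proof -
  \<comment> \<open>\<open>tr (N\<^sup>2) = tr (N (M M\<^sup>* - M\<^sup>* M)) = tr (M\<^sup>* (N M - M N)) = 0\<close>, and \<open>N\<close> is Hermitian.\<close>
  have N_herm: "N j k = cnj (N k j)" for j k
    by (simp add: N_def mult.commute)
  have "(\<Sum>k\<in>A. \<Sum>j\<in>A. N k j * N j k) = (\<Sum>k\<in>A. \<Sum>j\<in>A.
      N k j * ((\<Sum>l\<in>A. m j l * cnj (m k l)) - (\<Sum>l\<in>A. cnj (m l j) * m l k)))"
    by (simp add: N_def)
  also have "\<dots> = (\<Sum>k\<in>A. \<Sum>j\<in>A. \<Sum>l\<in>A. N k j * m j l * cnj (m k l))
        - (\<Sum>k\<in>A. \<Sum>j\<in>A. \<Sum>l\<in>A. N k j * cnj (m l j) * m l k)"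
    by (simp add: sum_subtractf sum_distrib_left right_diff_distrib mult.assoc)
  also have "\<dots> = (\<Sum>k\<in>A. \<Sum>l\<in>A. cnj (m k l) * ((\<Sum>j\<in>A. N k j * m j l) - (\<Sum>j\<in>A. m k j * N j l)))"
  proof -
    have "(\<Sum>k\<in>A. \<Sum>j\<in>A. \<Sum>l\<in>A. N k j * m j l * cnj (m k l))
        = (\<Sum>k\<in>A. \<Sum>l\<in>A. \<Sum>j\<in>A. cnj (m k l) * (N k j * m j l))"
      by (subst (2) sum.swap) (simp add: ac_simps)
    moreover have "(\<Sum>k\<in>A. \<Sum>j\<in>A. \<Sum>l\<in>A. N k j * cnj (m l j) * m l k)
        = (\<Sum>k\<in>A. \<Sum>l\<in>A. \<Sum>j\<in>A. cnj (m k l) * (m k j * N j l))"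
      by (subst sum.swap, subst (2) sum.swap, subst sum.swap) (simp add: ac_simps)
    ultimately show ?thesis
      by (simp add: sum_subtractf sum_distrib_left right_diff_distrib)
  qed
  also have "\<dots> = 0"
    by (simp add: comm cong: sum.cong)
  finally have trace_sq: "(\<Sum>k\<in>A. \<Sum>j\<in>A. N k j * N j k) = 0" .
  have "N k j * N j k = complex_of_real ((cmod (N k j))\<^sup>2)" for k j
    using N_herm[of j k] complex_norm_square[of "N k j"] by simp
  with trace_sq have "(\<Sum>k\<in>A. \<Sum>j\<in>A. complex_of_real ((cmod (N k j))\<^sup>2)) = 0"
    by simp
  then have "complex_of_real (\<Sum>k\<in>A. \<Sum>j\<in>A. (cmod (N k j))\<^sup>2) = 0"
    by (simp only: of_real_sum)
  then have "(\<Sum>k\<in>A. \<Sum>j\<in>A. (cmod (N k j))\<^sup>2) = 0"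
    by (simp only: of_real_eq_0_iff)
  then show ?thesis
    using A k j by (simp add: sum_nonneg_eq_0_iff sum_nonneg)
qed

locale cubic_semidirect =
  fixes m :: "idx4 \<Rightarrow> idx4 \<Rightarrow> complex" and lam :: complex
  assumes trace_zero: "trace_n m = 0" and lam_nonzero: "lam \<noteq> 0"
    and cube: "\<And>x. mat_n m (mat_n m (mat_n m x)) = lam *s proj_n x"
begin

lemma n_eq_bracket:
  "w$I1 = 0 \<Longrightarrow> w = semidirect_br m (axis I1 1) (inverse lam *s mat_n m (mat_n m w))"
  by (simp add: semidirect_br_e1 mat_n_linear cube proj_n_id lam_nonzero vector_smult_assoc)

context
  fixes D :: "idx4 cvec \<Rightarrow> idx4 cvec"
  assumes D: "derivation (semidirect_br m) D"
begin

lemma derivation_preserves_n: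
  assumes "w$I1 = 0"
  shows "D w $ I1 = 0"
proof -
  have "D w $ I1 = D (semidirect_br m (axis I1 1) (inverse lam *s mat_n m (mat_n m w))) $ I1"
    by (simp only: n_eq_bracket[OF assms, symmetric])
  then show ?thesis
    by (simp add: derivation_leibniz[OF D])
qed

lemma derivation_mat_n:
  assumes "u$I1 = 0"
  shows "D (mat_n m u) = (D (axis I1 1) $ I1) *s mat_n m u + mat_n m (D u)"
proof -
  have "D (mat_n m u) = D (semidirect_br m (axis I1 1) u)"
    by (simp add: semidirect_br_e1)
  also have "\<dots> = semidirect_br m (D (axis I1 1)) u + semidirect_br m (axis I1 1) (D u)"
    by (rule derivation_leibniz[OF D])
  finally show ?thesis
    using assms by (simp add: semidirect_br_def semidirect_br_e1)
qed

lemma derivation_e1_I1: "D (axis I1 1) $ I1 = 0"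
proof -
  define a where "a = D (axis I1 1) $ I1"
  define u :: "idx4 cvec" where "u = axis I2 1"
  have u: "u$I1 = 0" "u$I2 = 1"
    by (simp_all add: u_def axis_component)
  have Du: "D u $ I1 = 0"
    by (rule derivation_preserves_n[OF u(1)])
  note step = derivation_mat_n[folded a_def]
  have lin: "D (c *s x) = c *s D x" for c x
    by (rule complex_linear_scale[OF derivation_complex_linear[OF D]])
  \<comment> \<open>Each of the three factors \<open>M\<close> in \<open>M\<^sup>3 u = \<lambda> u\<close> contributes \<open>a M\<^sup>3 u\<close> under \<open>D\<close>.\<close>
  have "D (mat_n m (mat_n m (mat_n m u))) = a *s mat_n m (mat_n m (mat_n m u))
      + (a *s mat_n m (mat_n m (mat_n m u)) + (a *s mat_n m (mat_n m (mat_n m u))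
      + mat_n m (mat_n m (mat_n m (D u)))))"
    by (simp only: step[OF mat_n_I1] step[OF u(1)] mat_n_linear)
  then have "lam *s D u = a *s (lam *s u) + (a *s (lam *s u) + (a *s (lam *s u) + lam *s D u))"
    by (simp add: cube proj_n_id u(1) Du lin)
  then have "(lam *s D u) $ I2 = (a *s (lam *s u) + (a *s (lam *s u) + (a *s (lam *s u)
      + lam *s D u))) $ I2"
    by simp
  then have "3 * a * lam = 0"
    using u(2) by (simp add: algebra_simps)
  then show ?thesis
    using lam_nonzero by (simp add: a_def)
qed

lemma derivation_commutes_mat_n: "u$I1 = 0 \<Longrightarrow> D (mat_n m u) = mat_n m (D u)"
  by (simp add: derivation_mat_n derivation_e1_I1)

end

lemma semidirect_hcf_n:
  "x$I1 = 0 \<Longrightarrow> semidirect_hcf m x = mat_n m (mat_n_adj m x) - mat_n_adj m (mat_n m x)"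
  by (simp add: semidirect_hcf_def trace_zero)

theorem soliton_imp_normal:
  assumes "expanding_alg_soliton (semidirect_br m) std_ip"
  shows "mat_n m (mat_n_adj m x) = mat_n_adj m (mat_n m x)"
proof -
  obtain c D where D: "derivation (semidirect_br m) D"
    and E: "derivation (semidirect_br m) (h_adjoint std_ip D)"
    and K: "semidirect_hcf m = (\<lambda>X. complex_of_real c *s X + (1/2) *s (D X + h_adjoint std_ip D X))"
    using assms by (auto simp: expanding_alg_soliton_def hcf_operator_semidirect)
  have K_comm: "semidirect_hcf m (mat_n m u) = mat_n m (semidirect_hcf m u)" if "u$I1 = 0" for u
    unfolding K using derivation_commutes_mat_n[OF D that] derivation_commutes_mat_n[OF E that]
    by (simp add: mat_n_linear)
  \<comment> \<open>On \<open>n\<close> the HCF operator is the self-commutator \<open>[M, M\<^sup>*]\<close>, and it commutes with \<open>M\<close>.\<close>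
  define N where "N k j = (\<Sum>l\<in>{I2,I3,I4}. m k l * cnj (m j l))
    - (\<Sum>l\<in>{I2,I3,I4}. cnj (m l k) * m l j)" for k j
  define C where "C x = mat_n m (mat_n_adj m x) - mat_n_adj m (mat_n m x)" for x
  have C_component: "C x $ k = (if k = I1 then 0 else \<Sum>j\<in>{I2,I3,I4}. N k j * x$j)" for x k
    by (simp add: C_def mat_n_component mat_n_adj_component N_def algebra_simps)
  have K_n: "semidirect_hcf m x = C x" if "x$I1 = 0" for x
    using that by (simp add: semidirect_hcf_n C_def)
  have "(\<Sum>l\<in>{I2,I3,I4}. N k l * m l j) = (\<Sum>l\<in>{I2,I3,I4}. m k l * N l j)"
    if "k \<in> {I2,I3,I4}" "j \<in> {I2,I3,I4}" for k j
  proof -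
    have "semidirect_hcf m (mat_n m (axis j 1)) $ k = mat_n m (semidirect_hcf m (axis j 1)) $ k"
      using K_comm[of "axis j 1"] that by (auto simp: axis_component)
    then show ?thesis
      using that by (auto simp: K_n C_component mat_n_component axis_component)
  qed
  then have "N k j = 0" if "k \<in> {I2,I3,I4}" "j \<in> {I2,I3,I4}" for k j
    using self_commutator_eq_0[of "{I2,I3,I4}" m k j] that unfolding N_def by blast
  then have "C x $ k = 0" for k
    by (cases k) (simp_all add: C_component)
  then have "C x = 0"
    by (simp add: vec_eq_iff)
  then show ?thesis
    by (simp add: C_def)
qed

theorem isometric_imp_soliton:
  assumes r: "r > 0" and U: "\<And>x. mat_n_adj m (mat_n m x) = complex_of_real r *s proj_n x"
  shows "expanding_alg_soliton (semidirect_br m) std_ip"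
proof -
  have normal: "mat_n m (mat_n_adj m x) = complex_of_real r *s proj_n x" for x
  proof -
    have "proj_n x = inverse lam *s mat_n m (mat_n m (mat_n m x))"
      by (simp add: cube lam_nonzero vector_smult_assoc)
    then have "mat_n_adj m x = mat_n_adj m (inverse lam *s mat_n m (mat_n m (mat_n m x)))"
      by (metis mat_n_adj_proj_n)
    also have "\<dots> = (inverse lam * complex_of_real r) *s mat_n m (mat_n m x)"
      by (simp add: complex_linear_scale[OF complex_linear_mat_n_adj] U proj_n_id
          vector_smult_assoc)
    finally show ?thesis
      by (simp add: mat_n_linear cube lam_nonzero vector_smult_assoc)
  qed
  have diag: "(\<Sum>k\<in>{I2,I3,I4}. m k j * cnj (m k j)) = complex_of_real r" if "j \<in> {I2,I3,I4}" for j
    using arg_cong[where f = "\<lambda>v. v $ j", OF U[of "axis j 1"]] that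
    by (auto simp: mat_n_component mat_n_adj_component axis_component proj_n_def mult.commute)
  have "hcf_e1_coeff m = - (\<Sum>j\<in>{I2,I3,I4}. \<Sum>k\<in>{I2,I3,I4}. m k j * cnj (m k j))"
    by (simp add: hcf_e1_coeff_def trace_zero sum.swap[of _ "{I2,I3,I4}" "{I2,I3,I4}"])
  also have "\<dots> = - 3 * complex_of_real r"
    by (subst sum.cong[OF refl diag]) simp_all
  finally have e1_coeff: "hcf_e1_coeff m = - 3 * complex_of_real r" .
  \<comment> \<open>The HCF operator is \<open>-3r\<close> on \<open>e\<^sub>1\<close> and vanishes on \<open>n\<close>.\<close>
  define D where "D x = complex_of_real (3 * r) *s proj_n x" for x
  have D_derivation: "derivation (semidirect_br m) D"
    by (simp add: derivation_def complex_linear_def D_def proj_n_def semidirect_br_def mat_n_def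
        vec_eq_idx4 algebra_simps)
  have D_adjoint: "h_adjoint std_ip D = D"
    by (rule h_adjoint_eqI[OF hermitian_std_ip])
      (simp add: D_def std_ip_idx4 proj_n_def algebra_simps)
  have "semidirect_hcf m
      = (\<lambda>x. complex_of_real (- 3 * r) *s x + (1/2) *s (D x + h_adjoint std_ip D x))"
    by (simp add: fun_eq_iff semidirect_hcf_def e1_coeff trace_zero normal U D_adjoint D_def
        proj_n_def vec_eq_idx4 axis_component algebra_simps)
  then show ?thesis
    unfolding expanding_alg_soliton_def hcf_operator_semidirect
    using r D_derivation D_adjoint by (intro exI[of _ "- 3 * r"] exI[of _ D]) simp
qed

end

lemma adapted_frame_exists:
  assumes h: "hermitian_ip h"
  shows "\<exists>E :: idx4 \<Rightarrow> idx4 cvec. (\<forall>i j. h (E i) (E j) = (if i = j then 1 else 0))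
    \<and> (\<forall>k. k \<noteq> I1 \<longrightarrow> E k $ I1 = 0) \<and> E I1 $ I1 \<noteq> 0"
proof -
  note hs = hermitian_ip_simps[OF h] and unit = h_normalize_unit[OF h]
    and left = h_normalize_left[OF h] and comp0 = h_normalize_component_eq_0[OF h]
  define w2 where "w2 = Zb I2"
  define e2 where "e2 = h_normalize h w2"
  define w3 where "w3 = Zb I3 - h (Zb I3) e2 *s e2"
  define e3 where "e3 = h_normalize h w3"
  define w4 where "w4 = Zb I4 - h (Zb I4) e2 *s e2 - h (Zb I4) e3 *s e3"
  define e4 where "e4 = h_normalize h w4"
  define w1 where "w1 = Zb I1 - h (Zb I1) e2 *s e2 - h (Zb I1) e3 *s e3 - h (Zb I1) e4 *s e4"
  define e1 where "e1 = h_normalize h w1"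
  have e2c: "e2 $ I1 = 0" "e2 $ I3 = 0" "e2 $ I4 = 0" and w2: "w2 $ I2 = 1"
    by (simp_all add: e2_def w2_def Zb_def axis_component comp0)
  have e3c: "e3 $ I1 = 0" "e3 $ I4 = 0" and w3: "w3 $ I3 = 1"
    by (simp_all add: e3_def w3_def Zb_def axis_component e2c comp0)
  have e4c: "e4 $ I1 = 0" and w4: "w4 $ I4 = 1"
    by (simp_all add: e4_def w4_def Zb_def axis_component e2c e3c comp0)
  have w1: "w1 $ I1 = 1"
    by (simp add: w1_def Zb_def axis_component e2c e3c e4c)
  have nonzero: "w \<noteq> 0" if "w $ k = 1" for w :: "idx4 cvec" and k
    using that by auto
  have n22: "h e2 e2 = 1" and n33: "h e3 e3 = 1" and n44: "h e4 e4 = 1" and n11: "h e1 e1 = 1"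
    by (simp_all add: e1_def e2_def e3_def e4_def unit nonzero[OF w1] nonzero[OF w2] nonzero[OF w3]
        nonzero[OF w4])
  have o32: "h e3 e2 = 0"
    by (simp add: e3_def left w3_def hs n22)
  have o42: "h e4 e2 = 0" and o43: "h e4 e3 = 0"
    by (simp_all add: e4_def left w4_def hs n22 n33 o32 hermitian_ip_cnj[OF h, of e2 e3])
  have o12: "h e1 e2 = 0" and o13: "h e1 e3 = 0" and o14: "h e1 e4 = 0"
    by (simp_all add: e1_def left w1_def hs n22 n33 n44 o32 o42 o43
        hermitian_ip_cnj[OF h, of e2 e3] hermitian_ip_cnj[OF h, of e2 e4]
        hermitian_ip_cnj[OF h, of e3 e4])
  have sym: "h b a = 0" if "h a b = 0" for a b
    using hermitian_ip_cnj[OF h, of b a] that by simp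
  define E where "E k = (case k of I1 \<Rightarrow> e1 | I2 \<Rightarrow> e2 | I3 \<Rightarrow> e3 | I4 \<Rightarrow> e4)" for k
  have "h (E i) (E j) = (if i = j then 1 else 0)" for i j
    by (cases i; cases j) (simp_all add: E_def n11 n22 n33 n44 o12 o13 o14 o32 o42 o43
        sym[OF o12] sym[OF o13] sym[OF o14] sym[OF o32] sym[OF o42] sym[OF o43])
  moreover have "E k $ I1 = 0" if "k \<noteq> I1" for k
    using that by (cases k) (simp_all add: E_def e2c e3c e4c)
  moreover have "E I1 $ I1 \<noteq> 0"
    using h_normalize_component_neq_0[OF h, of w1 I1] by (simp add: E_def e1_def w1)
  ultimately show ?thesis
    by blast
qed

definition ad_Z1 :: "idx4 cvec \<Rightarrow> idx4 cvec" where
  "ad_Z1 Y = (\<chi> k. case k of I1 \<Rightarrow> 0 | I2 \<Rightarrow> Y$I4 | I3 \<Rightarrow> Y$I2 | I4 \<Rightarrow> Y$I3)"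

lemma ad_Z1_component [simp]:
  "ad_Z1 Y $ I1 = 0" "ad_Z1 Y $ I2 = Y$I4" "ad_Z1 Y $ I3 = Y$I2" "ad_Z1 Y $ I4 = Y$I3"
  by (simp_all add: ad_Z1_def)

lemma br_g4_eq: "br_g4 X Y = X$I1 *s ad_Z1 Y - Y$I1 *s ad_Z1 X"
  by (simp add: br_g4_def vec_eq_idx4 algebra_simps)

lemma br_g4_Z1: "br_g4 (Zb I1) Y = ad_Z1 Y"
  by (simp add: br_g4_eq Zb_def vec_eq_idx4 axis_component)

lemma complex_linear_ad_Z1: "complex_linear ad_Z1"
  by (simp add: complex_linear_def vec_eq_idx4)

lemma ad_Z1_cube: "ad_Z1 (ad_Z1 (ad_Z1 Y)) = proj_n Y"
  by (simp add: vec_eq_idx4 proj_n_def)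

lemma complex_trace_br_g4: "complex_trace (br_g4 X) = 0"
  by (simp add: complex_trace_def sum_idx4 br_g4_def axis_component)

definition frame_map :: "(idx4 \<Rightarrow> idx4 cvec) \<Rightarrow> idx4 cvec \<Rightarrow> idx4 cvec" where
  "frame_map E x = x$I1 *s E I1 + x$I2 *s E I2 + x$I3 *s E I3 + x$I4 *s E I4"

definition frame_coords ::
  "(idx4 cvec \<Rightarrow> idx4 cvec \<Rightarrow> complex) \<Rightarrow> (idx4 \<Rightarrow> idx4 cvec) \<Rightarrow> idx4 cvec \<Rightarrow> idx4 cvec" where
  "frame_coords h E y = (\<chi> k. h y (E k))"

text \<open>The matrix of \<open>ad E\<^sub>1\<close> on \<open>span {E\<^sub>2, E\<^sub>3, E\<^sub>4}\<close>, where
  \<open>ad E\<^sub>1 = a \<cdot> ad Z\<^sub>1\<close> with \<open>a\<close> the \<open>Z\<^sub>1\<close>-coordinate of \<open>E\<^sub>1\<close>.\<close>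

definition frame_matrix ::
  "(idx4 cvec \<Rightarrow> idx4 cvec \<Rightarrow> complex) \<Rightarrow> (idx4 \<Rightarrow> idx4 cvec) \<Rightarrow> idx4 \<Rightarrow> idx4 \<Rightarrow> complex" where
  "frame_matrix h E k j = E I1 $ I1 * h (ad_Z1 (E j)) (E k)"

locale g4_frame =
  fixes h :: "idx4 cvec \<Rightarrow> idx4 cvec \<Rightarrow> complex" and E :: "idx4 \<Rightarrow> idx4 cvec"
  assumes hermitian: "hermitian_ip h"
    and orthonormal: "\<And>i j. h (E i) (E j) = (if i = j then 1 else 0)"
    and E_n: "\<And>k. k \<noteq> I1 \<Longrightarrow> E k $ I1 = 0"
    and E1_I1: "E I1 $ I1 \<noteq> 0"
begin

abbreviation "a \<equiv> E I1 $ I1"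
abbreviation "T \<equiv> frame_map E"
abbreviation "Ti \<equiv> frame_coords h E"
abbreviation "m \<equiv> frame_matrix h E"

lemma complex_linear_T: "complex_linear T"
  by (simp add: complex_linear_def frame_map_def algebra_simps vector_add_ldistrib
      vector_smult_assoc)

lemma T_isometry: "h (T x) (T y) = std_ip x y"
  by (simp add: frame_map_def hermitian_ip_simps[OF hermitian] orthonormal std_ip_idx4)

lemma Ti_T: "Ti (T x) = x"
  by (simp add: frame_coords_def frame_map_def vec_eq_idx4 hermitian_ip_simps[OF hermitian]
      orthonormal)

lemma T_inj: "inj T"
  by (metis Ti_T injI)

lemma T_Ti: "T (Ti y) = y"
proof -
  have "surj T"
    using linear_injective_imp_surjective[OF complex_linear_imp_linear[OF complex_linear_T] T_inj]
    by auto
  then obtain x where "y = T x"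
    by blast
  then show ?thesis
    by (simp add: Ti_T)
qed

lemma T_I1: "T x $ I1 = x$I1 * a"
  by (simp add: frame_map_def E_n)

lemma orthogonal_E1:
  assumes "w$I1 = 0"
  shows "h w (E I1) = 0"
proof -
  have "w $ I1 = Ti w $ I1 * a"
    using T_I1[of "Ti w"] by (simp only: T_Ti)
  then show ?thesis
    using assms E1_I1 by (simp add: frame_coords_def)
qed

lemma T_e1: "T (axis I1 1) = E I1"
  by (simp add: frame_map_def axis_component)

lemma T_bracket: "br_g4 (T x) (T y) = T (semidirect_br m x y)"
proof -
  have "h (br_g4 (T x) (T y)) (E I1) = 0"
    by (rule orthogonal_E1) (simp add: br_g4_def)
  then have "Ti (br_g4 (T x) (T y)) = semidirect_br m x y"
    by (simp add: vec_eq_idx4 frame_coords_def br_g4_eq T_I1 hermitian_ip_simps[OF hermitian]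
        semidirect_br_def mat_n_def
        frame_matrix_def frame_map_def complex_linear_add[OF complex_linear_ad_Z1]
        complex_linear_scale[OF complex_linear_ad_Z1] E_n algebra_simps)
  then show ?thesis
    by (metis T_Ti)
qed

lemma T_mat_n: "T (mat_n m x) = a *s ad_Z1 (T (proj_n x))"
proof -
  have "T (mat_n m x) = T (semidirect_br m (axis I1 1) (proj_n x))"
    by (simp add: semidirect_br_e1)
  also have "\<dots> = br_g4 (E I1) (T (proj_n x))"
    by (simp only: T_bracket T_e1[symmetric])
  also have "\<dots> = a *s ad_Z1 (T (proj_n x))"
    by (simp add: br_g4_eq T_I1 proj_n_def)
  finally show ?thesis .
qed

lemma T_proj_n: "proj_n (T (proj_n x)) = T (proj_n x)"
  by (rule proj_n_id) (simp add: T_I1 proj_n_def)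

lemma mat_n_cube: "mat_n m (mat_n m (mat_n m x)) = a^3 *s proj_n x"
proof -
  have "T (mat_n m (mat_n m (mat_n m x))) = a *s ad_Z1 (a *s ad_Z1 (a *s ad_Z1 (T (proj_n x))))"
    by (simp add: T_mat_n proj_n_id[OF mat_n_I1])
  also have "\<dots> = T (a^3 *s proj_n x)"
    by (simp add: complex_linear_scale[OF complex_linear_ad_Z1] ad_Z1_cube T_proj_n
        complex_linear_scale[OF complex_linear_T] vector_smult_assoc power3_eq_cube)
  finally show ?thesis
    using T_inj by (simp add: inj_eq)
qed

lemma semidirect_isometry: "semidirect_isometry h br_g4 m T Ti"
  by unfold_locales (simp_all add: hermitian complex_linear_T Ti_T T_Ti T_isometry T_bracket)

lemma trace_n_zero: "trace_n m = 0"
  using semidirect_isometry.complex_trace_transport[OF semidirect_isometry, of "T (axis I1 1)"]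
  by (simp add: complex_trace_br_g4 Ti_T complex_trace_semidirect axis_component)

lemma cubic_semidirect: "cubic_semidirect m (a^3)"
  by unfold_locales (simp_all add: trace_n_zero E1_I1 mat_n_cube)

end

section \<open>Eigenvectors of \<open>ad Z\<^sub>1\<close>\<close>

definition omega :: complex where
  "omega = Complex (-1/2) (sqrt 3 / 2)"

lemma omega_cnj: "omega * cnj omega = 1"
  using real_sqrt_mult_self[of 3] by (simp add: omega_def complex_eq_iff algebra_simps)

lemma omega_square: "omega * omega = cnj omega"
  using real_sqrt_mult_self[of 3] by (simp add: omega_def complex_eq_iff algebra_simps)

lemma cnj_omega_square: "cnj omega * cnj omega = omega"
  by (metis omega_square complex_cnj_cnj complex_cnj_mult)

lemma omega_distinct: "omega \<noteq> 1" "cnj omega \<noteq> 1" "omega \<noteq> cnj omega"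
  by (simp_all add: omega_def complex_eq_iff)

lemma omega_simps: "cnj omega = - 1 - omega" "omega * omega = - 1 - omega"
  "omega * (omega * z) = (- 1 - omega) * z"
proof -
  show c: "cnj omega = - 1 - omega"
    by (simp add: omega_def complex_eq_iff)
  show s: "omega * omega = - 1 - omega"
    using omega_square c by simp
  show "omega * (omega * z) = (- 1 - omega) * z"
    using s by (simp add: mult.assoc[symmetric])
qed

definition cube_roots :: "complex set" where
  "cube_roots = {1, omega, cnj omega}"

lemma cube_roots_unit: "\<mu> \<in> cube_roots \<Longrightarrow> \<mu> * cnj \<mu> = 1"
  using omega_cnj by (auto simp: cube_roots_def mult.commute)

lemma cube_roots_square: "\<mu> \<in> cube_roots \<Longrightarrow> \<mu> * \<mu> = cnj \<mu>"
  using omega_square cnj_omega_square by (auto simp: cube_roots_def)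

definition eigvec :: "complex \<Rightarrow> idx4 cvec" where
  "eigvec \<mu> = (\<chi> k. case k of I1 \<Rightarrow> 0 | I2 \<Rightarrow> 1 | I3 \<Rightarrow> cnj \<mu> | I4 \<Rightarrow> \<mu>)"

lemma eigvec_component [simp]:
  "eigvec \<mu> $ I1 = 0" "eigvec \<mu> $ I2 = 1" "eigvec \<mu> $ I3 = cnj \<mu>" "eigvec \<mu> $ I4 = \<mu>"
  by (simp_all add: eigvec_def)

lemma eigvec_nonzero: "eigvec \<mu> \<noteq> 0"
  by (metis eigvec_component(2) zero_index zero_neq_one)

lemma ad_Z1_eigvec: "\<mu> \<in> cube_roots \<Longrightarrow> ad_Z1 (eigvec \<mu>) = \<mu> *s eigvec \<mu>"
  using cube_roots_unit[of \<mu>] cube_roots_square[of \<mu>] by (simp add: vec_eq_idx4)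

definition eigvecs_orthogonal :: "(idx4 cvec \<Rightarrow> idx4 cvec \<Rightarrow> complex) \<Rightarrow> bool" where
  "eigvecs_orthogonal h \<longleftrightarrow> h (eigvec 1) (eigvec omega) = 0 \<and> h (eigvec 1) (eigvec (cnj omega)) = 0
     \<and> h (eigvec omega) (eigvec (cnj omega)) = 0"

definition eig_coord :: "complex \<Rightarrow> idx4 cvec \<Rightarrow> complex" where
  "eig_coord \<mu> w = (w$I2 + \<mu> * w$I3 + cnj \<mu> * w$I4) / 3"

lemma eig_expansion:
  assumes "w$I1 = 0"
  shows "w = eig_coord 1 w *s eigvec 1 + eig_coord omega w *s eigvec omega
    + eig_coord (cnj omega) w *s eigvec (cnj omega)"
  using assms by (simp add: vec_eq_idx4 eig_coord_def omega_simps field_simps)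

lemma ad_Z1_eig_expansion:
  assumes "w$I1 = 0"
  shows "ad_Z1 w = eig_coord 1 w *s eigvec 1 + (eig_coord omega w * omega) *s eigvec omega
    + (eig_coord (cnj omega) w * cnj omega) *s eigvec (cnj omega)"
  by (subst eig_expansion[OF assms])
    (simp add: complex_linear_add[OF complex_linear_ad_Z1]
      complex_linear_scale[OF complex_linear_ad_Z1] ad_Z1_eigvec cube_roots_def vector_smult_assoc)

lemma ad_Z1_isometric:
  assumes h: "hermitian_ip h" and orth: "eigvecs_orthogonal h"
    and w: "w$I1 = 0" and w': "w'$I1 = 0"
  shows "h (ad_Z1 w) (ad_Z1 w') = h w w'"
proof -
  note hs = hermitian_ip_simps[OF h]
  have o: "h (eigvec 1) (eigvec omega) = 0" "h (eigvec 1) (eigvec (cnj omega)) = 0"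
    "h (eigvec omega) (eigvec (cnj omega)) = 0"
    using orth by (simp_all add: eigvecs_orthogonal_def)
  have o': "h (eigvec omega) (eigvec 1) = 0" "h (eigvec (cnj omega)) (eigvec 1) = 0"
    "h (eigvec (cnj omega)) (eigvec omega) = 0"
    using o hermitian_ip_cnj[OF h] by (metis complex_cnj_zero)+
  define A where "A = eig_coord 1 w *s eigvec 1 + eig_coord omega w *s eigvec omega
    + eig_coord (cnj omega) w *s eigvec (cnj omega)"
  define A' where "A' = eig_coord 1 w' *s eigvec 1 + eig_coord omega w' *s eigvec omega
    + eig_coord (cnj omega) w' *s eigvec (cnj omega)"
  have "h (ad_Z1 w) (ad_Z1 w') = eig_coord 1 w * cnj (eig_coord 1 w') * h (eigvec 1) (eigvec 1)
      + eig_coord omega w * cnj (eig_coord omega w') * (omega * cnj omega)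
        * h (eigvec omega) (eigvec omega)
      + eig_coord (cnj omega) w * cnj (eig_coord (cnj omega) w') * (omega * cnj omega)
        * h (eigvec (cnj omega)) (eigvec (cnj omega))"
    unfolding ad_Z1_eig_expansion[OF w] ad_Z1_eig_expansion[OF w']
    by (simp add: hs o o' algebra_simps)
  also have "\<dots> = h A A'"
    by (simp add: A_def A'_def hs o o' omega_cnj)
  also have "\<dots> = h w w'"
    using eig_expansion[OF w] eig_expansion[OF w'] by (simp add: A_def A'_def)
  finally show ?thesis .
qed

context g4_frame
begin

lemma mat_n_eigvec:
  assumes "\<mu> \<in> cube_roots"
  shows "mat_n m (Ti (eigvec \<mu>)) = (a * \<mu>) *s Ti (eigvec \<mu>)"
proof -
  have n: "proj_n (Ti (eigvec \<mu>)) = Ti (eigvec \<mu>)"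
    by (rule proj_n_id) (simp add: frame_coords_def orthogonal_E1)
  have "T (mat_n m (Ti (eigvec \<mu>))) = T ((a * \<mu>) *s Ti (eigvec \<mu>))"
    by (simp add: T_mat_n n T_Ti ad_Z1_eigvec[OF assms] complex_linear_scale[OF complex_linear_T]
        vector_smult_assoc)
  then show ?thesis
    using T_inj by (simp add: inj_eq)
qed

lemma soliton_imp_eigvecs_orthogonal:
  assumes "expanding_alg_soliton br_g4 h"
  shows "eigvecs_orthogonal h"
proof -
  have "expanding_alg_soliton (semidirect_br m) std_ip"
    using assms semidirect_isometry.soliton_transport[OF semidirect_isometry] by simp
  then have normal: "mat_n m (mat_n_adj m x) = mat_n_adj m (mat_n m x)" for x
    by (rule cubic_semidirect.soliton_imp_normal[OF cubic_semidirect])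
  have "h (eigvec \<mu>) (eigvec \<nu>) = 0"
    if "\<mu> \<in> cube_roots" "\<nu> \<in> cube_roots" "\<mu> \<noteq> \<nu>" for \<mu> \<nu>
  proof -
    have "std_ip (Ti (eigvec \<mu>)) (Ti (eigvec \<nu>)) = 0"
      using that E1_I1
      by (intro normal_eigenvectors_orthogonal[OF hermitian_std_ip complex_linear_mat_n_adj
            std_ip_mat_n normal mat_n_eigvec mat_n_eigvec]) simp_all
    then show ?thesis
      using T_isometry[of "Ti (eigvec \<mu>)" "Ti (eigvec \<nu>)"] by (simp add: T_Ti)
  qed
  then show ?thesis
    using omega_distinct by (simp add: eigvecs_orthogonal_def cube_roots_def eq_commute[of 1])
qed

lemma eigvecs_orthogonal_imp_soliton:
  assumes orth: "eigvecs_orthogonal h"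
  shows "expanding_alg_soliton br_g4 h"
proof -
  have isometric: "std_ip (mat_n m x) (mat_n m y) = a * cnj a * std_ip (proj_n x) (proj_n y)"
    for x y
  proof -
    have "std_ip (mat_n m x) (mat_n m y) = h (T (mat_n m x)) (T (mat_n m y))"
      by (simp add: T_isometry)
    also have "\<dots> = a * cnj a * h (ad_Z1 (T (proj_n x))) (ad_Z1 (T (proj_n y)))"
      by (simp add: T_mat_n hermitian_ip_simps[OF hermitian])
    also have "\<dots> = a * cnj a * h (T (proj_n x)) (T (proj_n y))"
      by (simp add: ad_Z1_isometric[OF hermitian orth] T_I1 proj_n_def)
    finally show ?thesis
      by (simp add: T_isometry)
  qed
  note std_cnj = hermitian_ip_cnj[OF hermitian_std_ip]
  have "std_ip (mat_n_adj m (mat_n m x)) y = std_ip (complex_of_real ((cmod a)\<^sup>2) *s proj_n x) y"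
    for x y
  proof -
    have "std_ip (mat_n_adj m (mat_n m x)) y = cnj (std_ip (mat_n m y) (mat_n m x))"
      by (simp add: std_cnj[of _ "mat_n_adj m (mat_n m x)"] std_ip_mat_n)
    also have "\<dots> = a * cnj a * std_ip (proj_n x) (proj_n y)"
      by (simp add: isometric std_cnj[of "proj_n x"])
    also have "\<dots> = std_ip (complex_of_real ((cmod a)\<^sup>2) *s proj_n x) y"
      using complex_norm_square[of a] by (simp add: std_ip_idx4 proj_n_def algebra_simps)
    finally show ?thesis .
  qed
  then have "mat_n_adj m (mat_n m x) = complex_of_real ((cmod a)\<^sup>2) *s proj_n x" for x
    by (simp add: hermitian_ip_eqI[OF hermitian_std_ip])
  then have "expanding_alg_soliton (semidirect_br m) std_ip"
    using E1_I1
    by (intro cubic_semidirect.isometric_imp_soliton[OF cubic_semidirect, of "(cmod a)\<^sup>2"])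
      simp_all
  then show ?thesis
    using semidirect_isometry.soliton_transport[OF semidirect_isometry] by simp
qed

end

theorem soliton_iff_eigvecs_orthogonal:
  assumes "hermitian_ip h"
  shows "expanding_alg_soliton br_g4 h \<longleftrightarrow> eigvecs_orthogonal h"
proof -
  obtain E where "g4_frame h E"
    using adapted_frame_exists[OF assms] assms by (auto simp: g4_frame_def)
  then show ?thesis
    using g4_frame.soliton_imp_eigvecs_orthogonal g4_frame.eigvecs_orthogonal_imp_soliton by blast
qed

section \<open>Homothetic normal form\<close>

lemma eig_coord_add: "eig_coord \<mu> (x + y) = eig_coord \<mu> x + eig_coord \<mu> y"
  by (simp add: eig_coord_def field_simps)

lemma eig_coord_scale: "eig_coord \<mu> (c *s x) = c * eig_coord \<mu> x"
  by (simp add: eig_coord_def field_simps)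

lemma eig_coord_Z1: "eig_coord \<mu> (Zb I1) = 0"
  by (simp add: eig_coord_def Zb_def axis_component)

lemma eig_coord_eigvec:
  "eig_coord 1 (eigvec 1) = 1" "eig_coord 1 (eigvec omega) = 0"
  "eig_coord 1 (eigvec (cnj omega)) = 0"
  "eig_coord omega (eigvec 1) = 0" "eig_coord omega (eigvec omega) = 1"
  "eig_coord omega (eigvec (cnj omega)) = 0"
  "eig_coord (cnj omega) (eigvec 1) = 0" "eig_coord (cnj omega) (eigvec omega) = 0"
  "eig_coord (cnj omega) (eigvec (cnj omega)) = 1"
  by (simp_all add: eig_coord_def omega_simps field_simps)

lemma eig_coord_ad_Z1: "\<mu> \<in> cube_roots \<Longrightarrow> eig_coord \<mu> (ad_Z1 Y) = \<mu> * eig_coord \<mu> Y"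
  using cube_roots_unit[of \<mu>] cube_roots_square[of \<mu>]
  by (simp add: eig_coord_def field_simps mult.assoc[symmetric])

lemma eig_full_expansion:
  "w = w$I1 *s Zb I1 + eig_coord 1 w *s eigvec 1 + eig_coord omega w *s eigvec omega
    + eig_coord (cnj omega) w *s eigvec (cnj omega)"
proof -
  have "proj_n w = eig_coord 1 w *s eigvec 1 + eig_coord omega w *s eigvec omega
      + eig_coord (cnj omega) w *s eigvec (cnj omega)"
    using eig_expansion[of "proj_n w"] by (simp add: proj_n_def eig_coord_def)
  moreover have "w = w$I1 *s Zb I1 + proj_n w"
    by (simp add: vec_eq_idx4 proj_n_def Zb_def axis_component)
  ultimately show ?thesis
    by (simp add: add.assoc)
qed

definition eig_scale :: "(complex \<Rightarrow> complex) \<Rightarrow> idx4 cvec \<Rightarrow> idx4 cvec" where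
  "eig_scale s w = w$I1 *s Zb I1 + (s 1 * eig_coord 1 w) *s eigvec 1
     + (s omega * eig_coord omega w) *s eigvec omega
     + (s (cnj omega) * eig_coord (cnj omega) w) *s eigvec (cnj omega)"

lemma eig_scale_I1: "eig_scale s w $ I1 = w$I1"
  by (simp add: eig_scale_def Zb_def)

lemma eig_coord_eig_scale:
  "eig_coord 1 (eig_scale s w) = s 1 * eig_coord 1 w"
  "eig_coord omega (eig_scale s w) = s omega * eig_coord omega w"
  "eig_coord (cnj omega) (eig_scale s w) = s (cnj omega) * eig_coord (cnj omega) w"
  by (simp_all add: eig_scale_def eig_coord_add eig_coord_scale eig_coord_Z1 eig_coord_eigvec)

lemma eig_scale_compose: "eig_scale s (eig_scale t w) = eig_scale (\<lambda>\<mu>. s \<mu> * t \<mu>) w"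
  by (simp only: eig_scale_def[of s "eig_scale t w"] eig_scale_I1 eig_coord_eig_scale)
    (simp add: eig_scale_def mult.assoc)

lemma eig_scale_one: "eig_scale (\<lambda>_. 1) w = w"
  by (simp add: eig_scale_def flip: eig_full_expansion)

lemma complex_linear_eig_scale: "complex_linear (eig_scale s)"
  by (simp add: complex_linear_def eig_scale_def eig_coord_add eig_coord_scale algebra_simps
      vector_add_ldistrib vector_sadd_rdistrib vector_smult_assoc)

lemma eig_scale_ad_Z1: "eig_scale s (ad_Z1 Y) = ad_Z1 (eig_scale s Y)"
  by (simp add: eig_scale_def eig_coord_ad_Z1 cube_roots_def ad_Z1_eigvec
      complex_linear_add[OF complex_linear_ad_Z1] complex_linear_scale[OF complex_linear_ad_Z1]
      vector_smult_assoc mult.commute mult.left_commute)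
    (simp add: vec_eq_idx4 Zb_def axis_component)

lemma lie_automorphism_eig_scale:
  assumes "\<And>\<mu>. \<mu> \<in> cube_roots \<Longrightarrow> s \<mu> \<noteq> 0"
  shows "lie_automorphism br_g4 (eig_scale s)"
  unfolding lie_automorphism_def
proof (intro conjI allI)
  have "eig_scale (\<lambda>\<mu>. s \<mu> * inverse (s \<mu>)) w = w"
    and "eig_scale (\<lambda>\<mu>. inverse (s \<mu>) * s \<mu>) w = w" for w
    using assms by (simp_all add: cube_roots_def eig_scale_def flip: eig_full_expansion)
  then have "eig_scale s (eig_scale (\<lambda>\<mu>. inverse (s \<mu>)) w) = w"
    and "eig_scale (\<lambda>\<mu>. inverse (s \<mu>)) (eig_scale s w) = w" for w
    by (simp_all only: eig_scale_compose)
  then show "bij (eig_scale s)"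
    by (intro o_bij[of "eig_scale (\<lambda>\<mu>. inverse (s \<mu>))"]) (simp_all add: fun_eq_iff)
  show "complex_linear (eig_scale s)"
    by (rule complex_linear_eig_scale)
  show "eig_scale s (br_g4 X Y) = br_g4 (eig_scale s X) (eig_scale s Y)" for X Y
    by (simp add: br_g4_eq complex_linear_diff[OF complex_linear_eig_scale]
        complex_linear_scale[OF complex_linear_eig_scale] eig_scale_ad_Z1 eig_scale_I1)
qed

definition g4_normal_form :: "(idx4 cvec \<Rightarrow> idx4 cvec \<Rightarrow> complex) \<Rightarrow> bool" where
  "g4_normal_form g \<longleftrightarrow> g (Zb I2) (Zb I2) = g (Zb I3) (Zb I3) \<and> g (Zb I3) (Zb I3) = g (Zb I4) (Zb I4)
     \<and> g (Zb I2) (Zb I3) = 0 \<and> g (Zb I2) (Zb I4) = 0 \<and> g (Zb I3) (Zb I4) = 0"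

lemma normal_form_ad_Z1_isometric:
  assumes g: "hermitian_ip g" and "g4_normal_form g" and u: "u$I1 = 0" and u': "u'$I1 = 0"
  shows "g (ad_Z1 u) (ad_Z1 u') = g u u'"
proof -
  have n: "g (Zb I2) (Zb I2) = g (Zb I3) (Zb I3)" "g (Zb I3) (Zb I3) = g (Zb I4) (Zb I4)"
    and o: "g (Zb I2) (Zb I3) = 0" "g (Zb I2) (Zb I4) = 0" "g (Zb I3) (Zb I4) = 0"
    using \<open>g4_normal_form g\<close> by (simp_all add: g4_normal_form_def)
  have o': "g (Zb I3) (Zb I2) = 0" "g (Zb I4) (Zb I2) = 0" "g (Zb I4) (Zb I3) = 0"
    using o hermitian_ip_cnj[OF g] by (metis complex_cnj_zero)+
  have decomp: "v = v$I2 *s Zb I2 + v$I3 *s Zb I3 + v$I4 *s Zb I4" if "v$I1 = 0" for v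
    using that by (simp add: vec_eq_idx4 Zb_def axis_component)
  have "g (ad_Z1 u) (ad_Z1 u') = g (u$I4 *s Zb I2 + u$I2 *s Zb I3 + u$I3 *s Zb I4)
      (u'$I4 *s Zb I2 + u'$I2 *s Zb I3 + u'$I3 *s Zb I4)"
    using decomp[of "ad_Z1 u"] decomp[of "ad_Z1 u'"] by simp
  also have "\<dots> = g (u$I2 *s Zb I2 + u$I3 *s Zb I3 + u$I4 *s Zb I4)
      (u'$I2 *s Zb I2 + u'$I3 *s Zb I3 + u'$I4 *s Zb I4)"
    by (simp add: hermitian_ip_simps[OF g] n o o' algebra_simps)
  also have "\<dots> = g u u'"
    using decomp[OF u] decomp[OF u'] by simp
  finally show ?thesis .
qed

lemma n_eq_bracket_g4: "w$I1 = 0 \<Longrightarrow> w = br_g4 (Zb I1) (ad_Z1 (ad_Z1 w))"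
  by (simp add: br_g4_Z1 ad_Z1_cube proj_n_id)

lemma normal_form_imp_eigvecs_orthogonal:
  assumes g: "hermitian_ip g" and "homothetically_equivalent br_g4 h g" and "g4_normal_form g"
  shows "eigvecs_orthogonal h"
proof -
  obtain k \<phi> where aut: "lie_automorphism br_g4 \<phi>"
    and h: "\<And>X Y. h X Y = complex_of_real k * g (\<phi> X) (\<phi> Y)"
    using assms(2) unfolding homothetically_equivalent_def by blast
  have \<phi>: "complex_linear \<phi>" "inj \<phi>" "\<And>X Y. \<phi> (br_g4 X Y) = br_g4 (\<phi> X) (\<phi> Y)"
    using aut bij_is_inj unfolding lie_automorphism_def by blast+
  define a where "a = \<phi> (Zb I1) $ I1"
  have \<phi>_n: "\<phi> w $ I1 = 0" if "w$I1 = 0" for w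
    using \<phi>(3)[of "Zb I1" "ad_Z1 (ad_Z1 w)"] n_eq_bracket_g4[OF that] by (simp add: br_g4_def)
  have \<phi>_eigvec: "a *s ad_Z1 (\<phi> (eigvec \<mu>)) = \<mu> *s \<phi> (eigvec \<mu>)" if "\<mu> \<in> cube_roots" for \<mu>
  proof -
    have "a *s ad_Z1 (\<phi> (eigvec \<mu>)) = \<phi> (br_g4 (Zb I1) (eigvec \<mu>))"
      by (simp only: \<phi>(3)) (simp add: br_g4_eq \<phi>_n a_def)
    then show ?thesis
      by (simp add: br_g4_Z1 ad_Z1_eigvec[OF that] complex_linear_scale[OF \<phi>(1)])
  qed
  define G where "G \<mu> \<nu> = g (\<phi> (eigvec \<mu>)) (\<phi> (eigvec \<nu>))" for \<mu> \<nu>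
  have key: "(a * cnj a - \<mu> * cnj \<nu>) * G \<mu> \<nu> = 0" if "\<mu> \<in> cube_roots" "\<nu> \<in> cube_roots" for \<mu> \<nu>
  proof -
    have "a * cnj a * G \<mu> \<nu> = g (a *s ad_Z1 (\<phi> (eigvec \<mu>))) (a *s ad_Z1 (\<phi> (eigvec \<nu>)))"
      by (simp add: hermitian_ip_simps[OF g] G_def normal_form_ad_Z1_isometric[OF g assms(3)] \<phi>_n)
    also have "\<dots> = \<mu> * cnj \<nu> * G \<mu> \<nu>"
      by (simp add: \<phi>_eigvec that hermitian_ip_simps[OF g] G_def)
    finally show ?thesis
      by (simp add: algebra_simps)
  qed
  have "\<phi> (eigvec 1) \<noteq> 0"
    using \<phi>(2) eigvec_nonzero complex_linear_zero[OF \<phi>(1)] by (metis injD)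
  then have "G 1 1 \<noteq> 0"
    using hermitian_ip_pos[OF g] unfolding G_def by fastforce
  then have "a * cnj a = 1"
    using key[of 1 1] by (simp add: cube_roots_def)
  then have "G \<mu> \<nu> = 0" if "\<mu> \<in> cube_roots" "\<nu> \<in> cube_roots" "\<mu> * cnj \<nu> \<noteq> 1" for \<mu> \<nu>
    using key[OF that(1,2)] that(3) by simp
  then show ?thesis
    using omega_distinct by (simp add: eigvecs_orthogonal_def h G_def cube_roots_def omega_square
        omega_distinct(3)[symmetric])
qed

lemma eig_coord_Zb:
  "eig_coord \<mu> (Zb I2) = 1/3" "eig_coord \<mu> (Zb I3) = \<mu>/3" "eig_coord \<mu> (Zb I4) = cnj \<mu>/3"
  by (simp_all add: eig_coord_def Zb_def axis_component)

lemma eigvecs_orthogonal_imp_normal_form: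
  assumes h: "hermitian_ip h" and orth: "eigvecs_orthogonal h"
  shows "\<exists>g. hermitian_ip g \<and> homothetically_equivalent br_g4 h g \<and> g4_normal_form g"
proof -
  note hs = hermitian_ip_simps[OF h]
  define s where "s \<mu> = complex_of_real (1 / sqrt (Re (h (eigvec \<mu>) (eigvec \<mu>))))" for \<mu>
  have s: "s \<mu> \<noteq> 0 \<and> s \<mu> * cnj (s \<mu>) * h (eigvec \<mu>) (eigvec \<mu>) = 1" for \<mu>
  proof -
    define r where "r = Re (h (eigvec \<mu>) (eigvec \<mu>))"
    have "r > 0"
      unfolding r_def by (rule hermitian_ip_pos[OF h eigvec_nonzero])
    moreover have "h (eigvec \<mu>) (eigvec \<mu>) = complex_of_real r"
      unfolding r_def by (rule hermitian_ip_diag_real[OF h])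
    ultimately show ?thesis
      by (simp add: s_def flip: r_def of_real_mult)
  qed
  define \<phi> where "\<phi> = eig_scale (\<lambda>\<mu>. inverse (s \<mu>))"
  define g where "g x y = h (eig_scale s x) (eig_scale s y)" for x y
  have inverse: "eig_scale s (\<phi> X) = X" "\<phi> (eig_scale s X) = X" for X
    using s by (simp_all add: \<phi>_def eig_scale_compose eig_scale_one)
  have "hermitian_ip g"
    unfolding g_def
    by (rule hermitian_ip_pullback[OF h complex_linear_eig_scale]) (metis inverse(2) injI)
  moreover have "homothetically_equivalent br_g4 h g"
    unfolding homothetically_equivalent_def
    using s by (intro exI[of _ 1] exI[of _ \<phi>])
      (simp add: \<phi>_def lie_automorphism_eig_scale g_def inverse[unfolded \<phi>_def])
  moreover have "g u v = eig_coord 1 u * cnj (eig_coord 1 v)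
      + eig_coord omega u * cnj (eig_coord omega v)
      + eig_coord (cnj omega) u * cnj (eig_coord (cnj omega) v)" if "u$I1 = 0" "v$I1 = 0" for u v
  proof -
    have o: "h (eigvec 1) (eigvec omega) = 0" "h (eigvec 1) (eigvec (cnj omega)) = 0"
      "h (eigvec omega) (eigvec (cnj omega)) = 0"
      using orth by (simp_all add: eigvecs_orthogonal_def)
    have o': "h (eigvec omega) (eigvec 1) = 0" "h (eigvec (cnj omega)) (eigvec 1) = 0"
      "h (eigvec (cnj omega)) (eigvec omega) = 0"
      using o hermitian_ip_cnj[OF h] by (metis complex_cnj_zero)+
    have "g u v = eig_coord 1 u * cnj (eig_coord 1 v) * (s 1 * cnj (s 1) * h (eigvec 1) (eigvec 1))
      + eig_coord omega u * cnj (eig_coord omega v)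
        * (s omega * cnj (s omega) * h (eigvec omega) (eigvec omega))
      + eig_coord (cnj omega) u * cnj (eig_coord (cnj omega) v)
        * (s (cnj omega) * cnj (s (cnj omega)) * h (eigvec (cnj omega)) (eigvec (cnj omega)))"
      using that by (simp add: g_def eig_scale_def hs o o' algebra_simps)
    then show ?thesis
      by (simp add: s)
  qed
  then have "g4_normal_form g"
    by (simp add: g4_normal_form_def Zb_def axis_component eig_coord_Zb[unfolded Zb_def]
        omega_cnj omega_simps field_simps)
  ultimately show ?thesis
    by blast
qed

theorem proposition4p3:
  fixes h :: "idx4 cvec \<Rightarrow> idx4 cvec \<Rightarrow> complex"
  assumes "hermitian_ip h"
  shows "expanding_alg_soliton br_g4 h \<longleftrightarrow>
    (\<exists>g. hermitian_ip g \<and> homothetically_equivalent br_g4 h g \<and>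
       g (Zb I2) (Zb I2) = g (Zb I3) (Zb I3) \<and> g (Zb I3) (Zb I3) = g (Zb I4) (Zb I4) \<and>
       g (Zb I2) (Zb I3) = 0 \<and> g (Zb I2) (Zb I4) = 0 \<and> g (Zb I3) (Zb I4) = 0)"
proof -
  have "expanding_alg_soliton br_g4 h \<longleftrightarrow> eigvecs_orthogonal h"
    by (rule soliton_iff_eigvecs_orthogonal[OF assms])
  also have "\<dots> \<longleftrightarrow> (\<exists>g. hermitian_ip g \<and> homothetically_equivalent br_g4 h g \<and> g4_normal_form g)"
    using eigvecs_orthogonal_imp_normal_form[OF assms] normal_form_imp_eigvecs_orthogonal by blast
  finally show ?thesis
    unfolding g4_normal_form_def .
qed

end
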